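(* Let $SG$ be a signed graph and $e$ a positive edge. There is a long exact sequence of graded abelian groups (degree-preserving maps) $$\cdots\to H_b^{i-1}(SG/e)\to H_b^i(SG)\to H_b^i(SG-e)\to H_b^i(SG/e)\to H_b^{i+1}(SG)\to\cdots.$$
   Context: Signed graphs: $SG=(G,\sigma)$, $G$ finite (loops, multiple edges allowed), $\sigma:E(G)\to\{\pm1\}$; $e$ positive means $\sigma(e)=1$. $SG-e$: delete $e$. $SG/e$: for non-loop $e$, delete $e$ and identify its endpoints, other edges keeping signs; for a loop, $SG/e=SG-e$. Negative circuit: product of edge signs $-1$; balanced = no negative circuit. $[G:s]$, $[SG:s]$: spanning subgraph with edge set $s$. Balanced chromatic cohomology: Fix a total order on $E(G)$. An enhanced state of $G$ is $S=(s,c)$, $c$ labels each component of $[G:s]$ by $1$ or $x$; $j(S)$ = number of $x$-labels (the grading). With $m(1,1)=1$, $m(1,x)=m(x,1)=x$, $m(x,x)=0$: for $e'\notin s$, $S_{e'}=(s\cup\{e'\},c_{e'})$ where a component containing both ends of $e'$ keeps its label and if $e'$ joins components $E_i,E_j$ the merged one gets $m(c(E_i),c(E_j))$ ($S_{e'}=0$ if both are $x$). $d(S)=\sum_{e'\notin s}(-1)^{n(e')}S_{e'}$, $n(e')$ = number of edges of $s$ preceding $e'$. $C^i_b(SG)$ is free on enhanced states with $|s|=i$ and $[SG:s]$ balanced; $f_b$ projects enhanced states of $G$ onto these (others to $0$); $d_b=f_b\circ d$; $H^i_b(SG)$ its cohomology. *)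

theory Defs
  imports "HOL-Algebra.Coset"
begin

text \<open>The edge type carries a total order (the fixed total
  order on E(G)); deletion and contraction use the induced order.\<close>

record ('v, 'e) sgraph =
  verts :: "'v set"
  edges :: "'e set"
  ends  :: "'e \<Rightarrow> 'v \<times> 'v"
  sgn   :: "'e \<Rightarrow> int"

definition wf_sgraph :: "('v, 'e) sgraph \<Rightarrow> bool" where
  "wf_sgraph G \<longleftrightarrow> finite (verts G) \<and> finite (edges G) \<and>
     (\<forall>f\<in>edges G. fst (ends G f) \<in> verts G \<and> snd (ends G f) \<in> verts G
                  \<and> sgn G f \<in> {1, -1})"

definition delete_edge :: "('v, 'e) sgraph \<Rightarrow> 'e \<Rightarrow> ('v, 'e) sgraph" where
  "delete_edge G e = G\<lparr>edges := edges G - {e}\<rparr>"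

definition contract_edge :: "('v, 'e) sgraph \<Rightarrow> 'e \<Rightarrow> ('v, 'e) sgraph" where
  "contract_edge G e =
    (let a = fst (ends G e); b = snd (ends G e); r = (\<lambda>x. if x = b then a else x) in
     if a = b then delete_edge G e
     else \<lparr>verts = verts G - {b}, edges = edges G - {e},
           ends = (\<lambda>f. map_prod r r (ends G f)), sgn = sgn G\<rparr>)"

definition adj :: "('v, 'e) sgraph \<Rightarrow> 'e set \<Rightarrow> ('v \<times> 'v) set" where
  "adj G s = {(a, b). \<exists>f\<in>s. ends G f = (a, b) \<or> ends G f = (b, a)}"

definition conn_rel :: "('v, 'e) sgraph \<Rightarrow> 'e set \<Rightarrow> ('v \<times> 'v) set" where
  "conn_rel G s = {(x, y). x \<in> verts G \<and> y \<in> verts G \<and> (x, y) \<in> (adj G s)\<^sup>*}"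

definition comps :: "('v, 'e) sgraph \<Rightarrow> 'e set \<Rightarrow> 'v set set" where
  "comps G s = verts G // conn_rel G s"

text \<open>A circuit of [G:s]: distinct edges es!0..es!(k-1) of s and distinct vertices
  vs!0..vs!(k-1), k \<ge> 1, where es!i joins vs!i and vs!((i+1) mod k).
  (k = 1: a loop; k = 2: two parallel edges.)\<close>
definition circuit :: "('v, 'e) sgraph \<Rightarrow> 'e set \<Rightarrow> 'e list \<Rightarrow> 'v list \<Rightarrow> bool" where
  "circuit G s es vs \<longleftrightarrow> length es = length vs \<and> length es \<ge> 1 \<and>
     distinct es \<and> distinct vs \<and> set es \<subseteq> s \<and>
     (\<forall>i < length es. {fst (ends G (es ! i)), snd (ends G (es ! i))}
                        = {vs ! i, vs ! (Suc i mod length es)})"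

definition balanced :: "('v, 'e) sgraph \<Rightarrow> 'e set \<Rightarrow> bool" where
  "balanced G s \<longleftrightarrow> \<not> (\<exists>es vs. circuit G s es vs \<and> prod_list (map (sgn G) es) = -1)"

text \<open>An enhanced state is (s, c) with c a labelling of the components of [G:s];
  c X = True means label x, False means label 1; c is False off the components.\<close>
type_synonym ('v, 'e) estate = "'e set \<times> ('v set \<Rightarrow> bool)"

definition xdeg :: "('v, 'e) sgraph \<Rightarrow> ('v, 'e) estate \<Rightarrow> nat" where
  "xdeg G S = card {X \<in> comps G (fst S). snd S X}"

definition bstates :: "('v, 'e) sgraph \<Rightarrow> nat \<Rightarrow> nat \<Rightarrow> ('v, 'e) estate set" where
  "bstates G i j = {(s, c). s \<subseteq> edges G \<and> card s = i \<and> balanced G s \<and>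
      (\<forall>X. X \<notin> comps G s \<longrightarrow> \<not> c X) \<and> xdeg G (s, c) = j}"

text \<open>Labels of S_{e'}: a new component gets label x iff it contains an old component
  labelled x (m(1,1)=1, m(1,x)=m(x,1)=x); S_{e'} = 0 iff a new component contains two
  old components labelled x (m(x,x) = 0).\<close>
definition ext_label :: "('v, 'e) sgraph \<Rightarrow> 'e set \<Rightarrow> ('v set \<Rightarrow> bool) \<Rightarrow> 'e \<Rightarrow> 'v set \<Rightarrow> bool" where
  "ext_label G s c e' = (\<lambda>Y. Y \<in> comps G (insert e' s) \<and>
      (\<exists>X\<in>comps G s. X \<subseteq> Y \<and> c X))"

definition ext_vanishes :: "('v, 'e) sgraph \<Rightarrow> 'e set \<Rightarrow> ('v set \<Rightarrow> bool) \<Rightarrow> 'e \<Rightarrow> bool" where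
  "ext_vanishes G s c e' \<longleftrightarrow> (\<exists>Y\<in>comps G (insert e' s).
      card {X \<in> comps G s. X \<subseteq> Y \<and> c X} \<ge> 2)"

text \<open>Coefficient of the basis state T in d_b(S) = f_b(d S).\<close>
definition dcoef :: "('v, 'e::linorder) sgraph \<Rightarrow> ('v, 'e) estate \<Rightarrow> ('v, 'e) estate \<Rightarrow> int" where
  "dcoef G S T = (if balanced G (fst T) then
      (\<Sum>e'\<in>edges G - fst S.
         if \<not> ext_vanishes G (fst S) (snd S) e' \<and>
            T = (insert e' (fst S), ext_label G (fst S) (snd S) e')
         then (-1) ^ card {f \<in> fst S. f < e'} else 0)
    else 0)"

text \<open>The free abelian group on a finite basis B, as finitely supported Z-valued
  functions (a multiplicative monoid record of HOL-Algebra).\<close>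
definition free_ab :: "'a set \<Rightarrow> ('a \<Rightarrow> int) monoid" where
  "free_ab B = \<lparr>carrier = {f. \<forall>x. x \<notin> B \<longrightarrow> f x = 0},
                mult = (\<lambda>f g x. f x + g x), one = (\<lambda>x. 0)\<rparr>"

definition cochains :: "('v, 'e) sgraph \<Rightarrow> nat \<Rightarrow> nat \<Rightarrow> (('v, 'e) estate \<Rightarrow> int) monoid" where
  "cochains G i j = free_ab (bstates G i j)"

definition dmap :: "('v, 'e::linorder) sgraph \<Rightarrow> nat \<Rightarrow> nat \<Rightarrow>
    (('v, 'e) estate \<Rightarrow> int) \<Rightarrow> (('v, 'e) estate \<Rightarrow> int)" where
  "dmap G i j f = (\<lambda>T. if T \<in> bstates G (Suc i) j
       then (\<Sum>S\<in>bstates G i j. f S * dcoef G S T) else 0)"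

definition bcohom :: "('v, 'e::linorder) sgraph \<Rightarrow> nat \<Rightarrow> nat \<Rightarrow>
    (('v, 'e) estate \<Rightarrow> int) set monoid" where
  "bcohom G i j =
     ((cochains G i j)\<lparr>carrier := kernel (cochains G i j) (cochains G (Suc i) j) (dmap G i j)\<rparr>)
     Mod (case i of 0 \<Rightarrow> {\<lambda>x. 0}
                  | Suc k \<Rightarrow> dmap G k j ` carrier (cochains G k j))"

end

theory Submission
  imports Defs "HOL-Library.Function_Algebras"
begin

text \<open>The states of \<open>SG\<close> not containing \<open>e\<close> are those of \<open>SG - e\<close>. Those containing \<open>e\<close> correspond
  to the states of \<open>SG/e\<close>: as \<open>e\<close> is positive, \<open>[SG : s \<union> {e}]\<close> is balanced iff \<open>[SG/e : s]\<close> is,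
  and contracting \<open>e\<close> matches their components and labels. Twisted by the sign
  \<open>(-1)^#{f \<in> s. e < f}\<close>, this is a short exact sequence of cochain complexes
  \<open>0 \<rightarrow> C\<^sup>i\<^sup>-\<^sup>1(SG/e) \<rightarrow> C\<^sup>i(SG) \<rightarrow> C\<^sup>i(SG - e) \<rightarrow> 0\<close> preserving \<open>j\<close>, and the
  long exact sequence is its cohomology sequence, with the usual zigzag connecting map.\<close>

section \<open>Cohomology of cochain complexes of finitely supported functions\<close>

definition supported :: "'a set \<Rightarrow> ('a \<Rightarrow> int) set" where
  "supported B = {f. \<forall>x. x \<notin> B \<longrightarrow> f x = 0}"

lemma supported_zero [simp]: "0 \<in> supported B"
  and supported_add [simp]: "f \<in> supported B \<Longrightarrow> g \<in> supported B \<Longrightarrow> f + g \<in> supported B"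
  and supported_uminus [simp]: "f \<in> supported B \<Longrightarrow> - f \<in> supported B"
  and supported_diff [simp]: "f \<in> supported B \<Longrightarrow> g \<in> supported B \<Longrightarrow> f - g \<in> supported B"
  by (simp_all add: supported_def)

lemma carrier_free_ab: "carrier (free_ab B) = supported B"
  by (simp add: free_ab_def supported_def)

lemma mult_free_ab: "mult (free_ab B) = (+)"
  by (simp add: free_ab_def plus_fun_def fun_eq_iff)

lemma one_free_ab: "one (free_ab B) = 0"
  by (simp add: free_ab_def zero_fun_def)

definition additive_map :: "'a set \<Rightarrow> 'b set \<Rightarrow> (('a \<Rightarrow> int) \<Rightarrow> ('b \<Rightarrow> int)) \<Rightarrow> bool" where
  "additive_map B B' f \<longleftrightarrow> (\<forall>x\<in>supported B. f x \<in> supported B') \<and>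
     (\<forall>x\<in>supported B. \<forall>y\<in>supported B. f (x + y) = f x + f y)"

lemma additive_map_supported: "additive_map B B' f \<Longrightarrow> x \<in> supported B \<Longrightarrow> f x \<in> supported B'"
  and additive_map_add:
    "additive_map B B' f \<Longrightarrow> x \<in> supported B \<Longrightarrow> y \<in> supported B \<Longrightarrow> f (x + y) = f x + f y"
  by (simp_all add: additive_map_def)

lemma additive_map_zero: "additive_map B B' f \<Longrightarrow> f 0 = 0"
  using additive_map_add[of B B' f 0 0] by simp

lemma additive_map_diff:
  assumes f: "additive_map B B' f" and x: "x \<in> supported B" and y: "y \<in> supported B"
  shows "f (x - y) = f x - f y"
  using additive_map_add[OF f supported_diff[OF x y] y] by simp

lemma additive_map_injective:
  assumes f: "additive_map B B' f" and ker: "\<And>x. x \<in> supported B \<Longrightarrow> f x = 0 \<Longrightarrow> x = 0"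
    and "x \<in> supported B" "y \<in> supported B" "f x = f y"
  shows "x = y"
  using ker[of "x - y"] additive_map_diff[OF f] assms(3-) by simp

definition add_subgroup :: "('a \<Rightarrow> int) set \<Rightarrow> bool" where
  "add_subgroup I \<longleftrightarrow> 0 \<in> I \<and> (\<forall>x\<in>I. \<forall>y\<in>I. x + y \<in> I) \<and> (\<forall>x\<in>I. - x \<in> I)"

lemma add_subgroup_zero: "add_subgroup I \<Longrightarrow> 0 \<in> I"
  and add_subgroup_add: "add_subgroup I \<Longrightarrow> x \<in> I \<Longrightarrow> y \<in> I \<Longrightarrow> x + y \<in> I"
  and add_subgroup_uminus: "add_subgroup I \<Longrightarrow> x \<in> I \<Longrightarrow> - x \<in> I"
  by (simp_all add: add_subgroup_def)

lemma add_subgroup_diff: "add_subgroup I \<Longrightarrow> x \<in> I \<Longrightarrow> y \<in> I \<Longrightarrow> x - y \<in> I"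
  using add_subgroup_add[of I x "- y"] add_subgroup_uminus[of I y] by simp

definition add_coset :: "('a \<Rightarrow> int) set \<Rightarrow> ('a \<Rightarrow> int) \<Rightarrow> ('a \<Rightarrow> int) set" where
  "add_coset I a = (\<lambda>h. h + a) ` I"

lemma mem_add_coset_iff: "x \<in> add_coset I a \<longleftrightarrow> x - a \<in> I"
  unfolding add_coset_def by (auto intro: image_eqI[of x _ "x - a"])

lemma add_coset_zero [simp]: "add_coset I 0 = I"
  by (simp add: add_coset_def)

lemma add_coset_self: "add_subgroup I \<Longrightarrow> a \<in> add_coset I a"
  by (simp add: mem_add_coset_iff add_subgroup_zero)

lemma add_coset_eq_iff:
  assumes I: "add_subgroup I"
  shows "add_coset I a = add_coset I b \<longleftrightarrow> a - b \<in> I"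
proof
  assume "add_coset I a = add_coset I b"
  then show "a - b \<in> I" using add_coset_self[OF I, of a] by (simp add: mem_add_coset_iff)
next
  assume ab: "a - b \<in> I"
  have "x - a \<in> I \<longleftrightarrow> x - b \<in> I" for x
    using add_subgroup_add[OF I _ ab, of "x - a"] add_subgroup_diff[OF I _ ab, of "x - b"]
    by (auto simp: algebra_simps)
  then show "add_coset I a = add_coset I b" by (auto simp: mem_add_coset_iff)
qed

lemma add_coset_eq_subgroup_iff: "add_subgroup I \<Longrightarrow> add_coset I a = I \<longleftrightarrow> a \<in> I"
  using add_coset_eq_iff[of I a 0] by simp

lemma add_coset_set_add:
  assumes I: "add_subgroup I"
  shows "(\<Union>h\<in>add_coset I a. \<Union>k\<in>add_coset I b. {h + k}) = add_coset I (a + b)"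
proof (intro equalityI subsetI)
  fix x assume "x \<in> (\<Union>h\<in>add_coset I a. \<Union>k\<in>add_coset I b. {h + k})"
  then obtain h k where "h - a \<in> I" "k - b \<in> I" "x = h + k" by (auto simp: mem_add_coset_iff)
  then show "x \<in> add_coset I (a + b)"
    using add_subgroup_add[OF I, of "h - a" "k - b"] by (simp add: mem_add_coset_iff algebra_simps)
next
  fix x assume "x \<in> add_coset I (a + b)"
  then have "x - b \<in> add_coset I a" by (simp add: mem_add_coset_iff algebra_simps)
  then show "x \<in> (\<Union>h\<in>add_coset I a. \<Union>k\<in>add_coset I b. {h + k})"
    using add_coset_self[OF I, of b] by force
qed

definition boundaries :: "(nat \<Rightarrow> 'a set) \<Rightarrow> (nat \<Rightarrow> ('a \<Rightarrow> int) \<Rightarrow> ('a \<Rightarrow> int)) \<Rightarrow> nat \<Rightarrow> ('a \<Rightarrow> int) set"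
  where "boundaries B d i = (case i of 0 \<Rightarrow> {0} | Suc k \<Rightarrow> d k ` supported (B k))"

definition cocycles :: "(nat \<Rightarrow> 'a set) \<Rightarrow> (nat \<Rightarrow> ('a \<Rightarrow> int) \<Rightarrow> ('a \<Rightarrow> int)) \<Rightarrow> nat \<Rightarrow> ('a \<Rightarrow> int) set"
  where "cocycles B d i = {f \<in> supported (B i). d i f = 0}"

definition cohomology ::
    "(nat \<Rightarrow> 'a set) \<Rightarrow> (nat \<Rightarrow> ('a \<Rightarrow> int) \<Rightarrow> ('a \<Rightarrow> int)) \<Rightarrow> nat \<Rightarrow> ('a \<Rightarrow> int) set monoid" where
  "cohomology B d i =
     ((free_ab (B i))\<lparr>carrier := kernel (free_ab (B i)) (free_ab (B (Suc i))) (d i)\<rparr>)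
     Mod (case i of 0 \<Rightarrow> {\<lambda>x. 0} | Suc k \<Rightarrow> d k ` carrier (free_ab (B k)))"

lemma bcohom_eq_cohomology: "bcohom G i j = cohomology (\<lambda>n. bstates G n j) (\<lambda>n. dmap G n j) i"
  unfolding bcohom_def cohomology_def cochains_def ..

lemma cocycles_supported: "a \<in> cocycles B d i \<Longrightarrow> a \<in> supported (B i)"
  by (simp add: cocycles_def)

lemma cohomology_carrier:
  "carrier (cohomology B d i) = add_coset (boundaries B d i) ` cocycles B d i"
proof -
  have I: "(case i of 0 \<Rightarrow> {\<lambda>x. 0} | Suc k \<Rightarrow> d k ` carrier (free_ab (B k))) = boundaries B d i"
    by (cases i) (simp_all add: boundaries_def carrier_free_ab zero_fun_def)
  have K: "kernel (free_ab (B i)) (free_ab (B (Suc i))) (d i) = cocycles B d i"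
    by (simp add: kernel_def cocycles_def carrier_free_ab one_free_ab)
  have R: "r_coset (free_ab (B i)\<lparr>carrier := cocycles B d i\<rparr>) H a = add_coset H a" for H a
    by (auto simp: r_coset_def add_coset_def mult_free_ab)
  show ?thesis
    unfolding cohomology_def I K FactGroup_def RCOSETS_def R by auto
qed

lemma add_coset_in_cohomology:
  "a \<in> cocycles B d i \<Longrightarrow> add_coset (boundaries B d i) a \<in> carrier (cohomology B d i)"
  unfolding cohomology_carrier by blast

lemma cohomology_one: "one (cohomology B d i) = boundaries B d i"
  by (cases i) (simp_all add: cohomology_def boundaries_def carrier_free_ab zero_fun_def)

lemma cohomology_mult: "mult (cohomology B d i) X Y = (\<Union>h\<in>X. \<Union>k\<in>Y. {h + k})"
  by (simp add: cohomology_def FactGroup_def set_mult_def mult_free_ab)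

lemma kernel_cohomology:
  "kernel (cohomology B1 d1 i1) (cohomology B2 d2 i2) F
     = {X \<in> carrier (cohomology B1 d1 i1). F X = boundaries B2 d2 i2}"
  by (simp add: kernel_def cohomology_one)

lemma boundaries_subgroup:
  assumes d: "\<And>n. additive_map (B n) (B (Suc n)) (d n)"
  shows "add_subgroup (boundaries B d i)"
proof (cases i)
  case 0 then show ?thesis by (simp add: boundaries_def add_subgroup_def)
next
  case (Suc k)
  have "x + y \<in> d k ` supported (B k)" if xy: "x \<in> d k ` supported (B k)" "y \<in> d k ` supported (B k)" for x y
  proof -
    obtain u v where "u \<in> supported (B k)" "v \<in> supported (B k)" "x = d k u" "y = d k v"
      using xy by blast
    then show ?thesis using additive_map_add[OF d, of u k v] by (metis image_eqI supported_add)
  qed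
  moreover have "- x \<in> d k ` supported (B k)" if x: "x \<in> d k ` supported (B k)" for x
  proof -
    obtain u where "u \<in> supported (B k)" "x = d k u" using x by blast
    then show ?thesis using additive_map_diff[OF d supported_zero, of u k] additive_map_zero[OF d]
      by (metis diff_0 image_eqI supported_uminus)
  qed
  moreover have "0 \<in> d k ` supported (B k)"
    using additive_map_zero[OF d] by (metis image_eqI supported_zero)
  ultimately show ?thesis using Suc by (simp add: boundaries_def add_subgroup_def)
qed

lemma boundaries_supported:
  assumes d: "\<And>n. additive_map (B n) (B (Suc n)) (d n)"
  shows "boundaries B d i \<subseteq> supported (B i)"
  using additive_map_supported[OF d] by (cases i) (auto simp: boundaries_def)

lemma hom_cohomologyI:
  assumes I1: "add_subgroup (boundaries B1 d1 i1)" and I2: "add_subgroup (boundaries B2 d2 i2)"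
    and rep: "\<And>a. a \<in> cocycles B1 d1 i1 \<Longrightarrow>
      \<exists>y\<in>cocycles B2 d2 i2. F (add_coset (boundaries B1 d1 i1) a) = add_coset (boundaries B2 d2 i2) y"
    and add: "\<And>a a' y y'. a \<in> cocycles B1 d1 i1 \<Longrightarrow> a' \<in> cocycles B1 d1 i1 \<Longrightarrow>
      F (add_coset (boundaries B1 d1 i1) a) = add_coset (boundaries B2 d2 i2) y \<Longrightarrow>
      F (add_coset (boundaries B1 d1 i1) a') = add_coset (boundaries B2 d2 i2) y' \<Longrightarrow>
      F (add_coset (boundaries B1 d1 i1) (a + a')) = add_coset (boundaries B2 d2 i2) (y + y')"
  shows "F \<in> hom (cohomology B1 d1 i1) (cohomology B2 d2 i2)"
  unfolding hom_def
proof (intro CollectI conjI ballI)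
  show "F \<in> carrier (cohomology B1 d1 i1) \<rightarrow> carrier (cohomology B2 d2 i2)"
    using rep unfolding cohomology_carrier by blast
  fix X Y assume "X \<in> carrier (cohomology B1 d1 i1)" "Y \<in> carrier (cohomology B1 d1 i1)"
  then obtain a a' where a: "a \<in> cocycles B1 d1 i1" "X = add_coset (boundaries B1 d1 i1) a"
    and a': "a' \<in> cocycles B1 d1 i1" "Y = add_coset (boundaries B1 d1 i1) a'"
    unfolding cohomology_carrier by blast
  obtain y y' where y: "F X = add_coset (boundaries B2 d2 i2) y"
    and y': "F Y = add_coset (boundaries B2 d2 i2) y'" using rep a a' by metis
  have "F (X \<otimes>\<^bsub>cohomology B1 d1 i1\<^esub> Y) = add_coset (boundaries B2 d2 i2) (y + y')"
    unfolding cohomology_mult a(2) a'(2) add_coset_set_add[OF I1]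
    using add[OF a(1) a'(1)] y y' a(2) a'(2) by simp
  also have "\<dots> = F X \<otimes>\<^bsub>cohomology B2 d2 i2\<^esub> F Y"
    unfolding cohomology_mult y y' add_coset_set_add[OF I2] ..
  finally show "F (X \<otimes>\<^bsub>cohomology B1 d1 i1\<^esub> Y) = F X \<otimes>\<^bsub>cohomology B2 d2 i2\<^esub> F Y" .
qed

definition induced :: "('b \<Rightarrow> int) set \<Rightarrow> (('a \<Rightarrow> int) \<Rightarrow> ('b \<Rightarrow> int)) \<Rightarrow> ('a \<Rightarrow> int) set \<Rightarrow> ('b \<Rightarrow> int) set"
  where "induced J F X = (\<Union>x\<in>X. add_coset J (F x))"

lemma induced_add_coset:
  assumes F: "additive_map B B' F" and J: "add_subgroup J" and I: "add_subgroup I"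
    and IB: "I \<subseteq> supported B" and FI: "F ` I \<subseteq> J" and b: "b \<in> supported B"
  shows "induced J F (add_coset I b) = add_coset J (F b)"
  unfolding induced_def
proof (rule SUP_eq_const)
  show "add_coset I b \<noteq> {}" using add_coset_self[OF I] by blast
  fix x assume "x \<in> add_coset I b"
  then have h: "x - b \<in> I" by (simp add: mem_add_coset_iff)
  then have "F x - F b = F (x - b)"
    using additive_map_diff[OF F _ b, of x] IB by (metis diff_add_cancel subsetD supported_add b)
  then show "add_coset J (F x) = add_coset J (F b)"
    using FI h by (auto simp: add_coset_eq_iff[OF J])
qed

lemma induced_hom:
  assumes d1: "\<And>n. additive_map (B1 n) (B1 (Suc n)) (d1 n)"
    and d2: "\<And>n. additive_map (B2 n) (B2 (Suc n)) (d2 n)"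
    and F: "additive_map (B1 i1) (B2 i2) F"
    and FI: "F ` boundaries B1 d1 i1 \<subseteq> boundaries B2 d2 i2"
    and FZ: "F ` cocycles B1 d1 i1 \<subseteq> cocycles B2 d2 i2"
  shows "induced (boundaries B2 d2 i2) F \<in> hom (cohomology B1 d1 i1) (cohomology B2 d2 i2)"
proof (rule hom_cohomologyI[OF boundaries_subgroup[of B1 d1, OF d1] boundaries_subgroup[of B2 d2, OF d2]])
  note ind = induced_add_coset[OF F boundaries_subgroup[of B2 d2, OF d2] boundaries_subgroup[of B1 d1, OF d1]
      boundaries_supported[of B1 d1, OF d1] FI]
  fix a assume "a \<in> cocycles B1 d1 i1"
  then show "\<exists>y\<in>cocycles B2 d2 i2. induced (boundaries B2 d2 i2) F (add_coset (boundaries B1 d1 i1) a)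
      = add_coset (boundaries B2 d2 i2) y"
    using ind cocycles_supported FZ by blast
next
  note ind = induced_add_coset[OF F boundaries_subgroup[of B2 d2, OF d2] boundaries_subgroup[of B1 d1, OF d1]
      boundaries_supported[of B1 d1, OF d1] FI]
  fix a a' y y' assume a: "a \<in> cocycles B1 d1 i1" "a' \<in> cocycles B1 d1 i1"
    and y: "induced (boundaries B2 d2 i2) F (add_coset (boundaries B1 d1 i1) a) = add_coset (boundaries B2 d2 i2) y"
    and y': "induced (boundaries B2 d2 i2) F (add_coset (boundaries B1 d1 i1) a') = add_coset (boundaries B2 d2 i2) y'"
  have "F a - y \<in> boundaries B2 d2 i2" "F a' - y' \<in> boundaries B2 d2 i2"
    using y y' ind a cocycles_supported add_coset_eq_iff[OF boundaries_subgroup[of B2 d2, OF d2]] by metis+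
  then have "(F a - y) + (F a' - y') \<in> boundaries B2 d2 i2"
    by (rule add_subgroup_add[OF boundaries_subgroup[of B2 d2, OF d2]])
  moreover have "F (a + a') = F a + F a'"
    using additive_map_add[OF F] a cocycles_supported by blast
  ultimately have "F (a + a') - (y + y') \<in> boundaries B2 d2 i2"
    by (simp add: algebra_simps)
  then show "induced (boundaries B2 d2 i2) F (add_coset (boundaries B1 d1 i1) (a + a'))
      = add_coset (boundaries B2 d2 i2) (y + y')"
    using ind[of "a + a'"] a cocycles_supported add_coset_eq_iff[OF boundaries_subgroup[of B2 d2, OF d2]]
    by (metis supported_add)
qed

text \<open>A short exact sequence \<open>0 \<rightarrow> A\<^sup>n \<rightarrow> B\<^sup>n\<^sup>+\<^sup>1 \<rightarrow> C\<^sup>n\<^sup>+\<^sup>1 \<rightarrow> 0\<close> of cochain groups, together with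
  \<open>B\<^sup>0 \<cong> C\<^sup>0\<close>: the complex \<open>A\<close> enters with its degrees shifted by one. Only \<open>d\<^sub>B\<close> needs to square
  to zero.\<close>

locale short_exact_cochains =
  fixes A B C :: "nat \<Rightarrow> 'a set"
    and dA dB dC incl proj :: "nat \<Rightarrow> ('a \<Rightarrow> int) \<Rightarrow> ('a \<Rightarrow> int)"
  assumes dA_additive: "additive_map (A n) (A (Suc n)) (dA n)"
    and dB_additive: "additive_map (B n) (B (Suc n)) (dB n)"
    and dC_additive: "additive_map (C n) (C (Suc n)) (dC n)"
    and dB_dB: "x \<in> supported (B n) \<Longrightarrow> dB (Suc n) (dB n x) = 0"
    and incl_additive: "additive_map (A n) (B (Suc n)) (incl n)"
    and incl_kernel: "x \<in> supported (A n) \<Longrightarrow> incl n x = 0 \<Longrightarrow> x = 0"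
    and proj_additive: "additive_map (B n) (C n) (proj n)"
    and proj_surj: "c \<in> supported (C n) \<Longrightarrow> \<exists>b\<in>supported (B n). proj n b = c"
    and exact_middle: "b \<in> supported (B (Suc n)) \<Longrightarrow> proj (Suc n) b = 0 \<Longrightarrow> \<exists>a\<in>supported (A n). incl n a = b"
    and proj_incl: "a \<in> supported (A n) \<Longrightarrow> proj (Suc n) (incl n a) = 0"
    and proj0_kernel: "b \<in> supported (B 0) \<Longrightarrow> proj 0 b = 0 \<Longrightarrow> b = 0"
    and proj_chain: "b \<in> supported (B n) \<Longrightarrow> proj (Suc n) (dB n b) = dC n (proj n b)"
    and incl_chain: "a \<in> supported (A n) \<Longrightarrow> dB (Suc n) (incl n a) = incl (Suc n) (dA n a)"
begin

abbreviation "BdA \<equiv> boundaries A dA"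
abbreviation "BdB \<equiv> boundaries B dB"
abbreviation "BdC \<equiv> boundaries C dC"
abbreviation "ZA \<equiv> cocycles A dA"
abbreviation "ZB \<equiv> cocycles B dB"
abbreviation "ZC \<equiv> cocycles C dC"
abbreviation "HA \<equiv> cohomology A dA"
abbreviation "HB \<equiv> cohomology B dB"
abbreviation "HC \<equiv> cohomology C dC"

lemmas BdA_subgroup = boundaries_subgroup[of A dA, OF dA_additive]
lemmas BdB_subgroup = boundaries_subgroup[of B dB, OF dB_additive]
lemmas BdC_subgroup = boundaries_subgroup[of C dC, OF dC_additive]

lemma incl_injective: "x \<in> supported (A n) \<Longrightarrow> y \<in> supported (A n) \<Longrightarrow> incl n x = incl n y \<Longrightarrow> x = y"
  by (rule additive_map_injective[OF incl_additive incl_kernel])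

lemma dB_boundary: "b \<in> supported (B i) \<Longrightarrow> dB i b \<in> BdB (Suc i)"
  by (simp add: boundaries_def)

lemma proj_boundaries: "proj i ` BdB i \<subseteq> BdC i"
  using additive_map_zero[OF proj_additive] proj_chain additive_map_supported[OF proj_additive]
  by (cases i) (auto simp: boundaries_def)

lemma incl_boundaries: "incl i ` BdA i \<subseteq> BdB (Suc i)"
proof (cases i)
  case 0
  then show ?thesis
    using dB_boundary[OF supported_zero] additive_map_zero[OF incl_additive] additive_map_zero[OF dB_additive]
    by (simp add: boundaries_def)
next
  case (Suc k)
  have "incl (Suc k) (dA k x) \<in> BdB (Suc (Suc k))" if "x \<in> supported (A k)" for x
    using dB_boundary[OF additive_map_supported[OF incl_additive that]] incl_chain[OF that] by simp
  then show ?thesis using Suc by (auto simp: boundaries_def)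
qed

lemma proj_cocycles: "proj i ` ZB i \<subseteq> ZC i"
proof
  fix c assume "c \<in> proj i ` ZB i"
  then obtain b where b: "b \<in> supported (B i)" "dB i b = 0" "c = proj i b" by (auto simp: cocycles_def)
  then have "dC i c = 0" using proj_chain[OF b(1)] additive_map_zero[OF proj_additive] by simp
  then show "c \<in> ZC i" using additive_map_supported[OF proj_additive b(1)] b(3) by (simp add: cocycles_def)
qed

lemma incl_cocycles: "incl i ` ZA i \<subseteq> ZB (Suc i)"
  using incl_chain additive_map_zero[OF incl_additive] additive_map_supported[OF incl_additive]
  by (auto simp: cocycles_def)

definition proj_map :: "nat \<Rightarrow> ('a \<Rightarrow> int) set \<Rightarrow> ('a \<Rightarrow> int) set"
  where "proj_map i = induced (BdC i) (proj i)"

definition incl_map :: "nat \<Rightarrow> ('a \<Rightarrow> int) set \<Rightarrow> ('a \<Rightarrow> int) set"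
  where "incl_map i = induced (BdB (Suc i)) (incl i)"

lemma proj_map_hom: "proj_map i \<in> hom (HB i) (HC i)"
  unfolding proj_map_def
  by (rule induced_hom[OF dB_additive dC_additive proj_additive proj_boundaries proj_cocycles])

lemma incl_map_hom: "incl_map i \<in> hom (HA i) (HB (Suc i))"
  unfolding incl_map_def
  by (rule induced_hom[OF dA_additive dB_additive incl_additive incl_boundaries incl_cocycles])

lemma proj_map_add_coset: "b \<in> supported (B i) \<Longrightarrow> proj_map i (add_coset (BdB i) b) = add_coset (BdC i) (proj i b)"
  unfolding proj_map_def
  by (rule induced_add_coset[OF proj_additive BdC_subgroup BdB_subgroup
        boundaries_supported[of B dB, OF dB_additive] proj_boundaries])

lemma incl_map_add_coset:
  "a \<in> supported (A i) \<Longrightarrow> incl_map i (add_coset (BdA i) a) = add_coset (BdB (Suc i)) (incl i a)"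
  unfolding incl_map_def
  by (rule induced_add_coset[OF incl_additive BdB_subgroup BdA_subgroup
        boundaries_supported[of A dA, OF dA_additive] incl_boundaries])

definition connecting :: "nat \<Rightarrow> ('a \<Rightarrow> int) set \<Rightarrow> ('a \<Rightarrow> int) set" where
  "connecting i X = (\<Union>c\<in>X. \<Union>{add_coset (BdA i) a | a. a \<in> supported (A i) \<and>
     (\<exists>b\<in>supported (B i). proj i b = c \<and> incl i a = dB i b)})"

lemma connecting_lift_exists:
  assumes "c \<in> ZC i"
  shows "\<exists>a b. a \<in> ZA i \<and> b \<in> supported (B i) \<and> proj i b = c \<and> incl i a = dB i b"
proof -
  have c: "c \<in> supported (C i)" "dC i c = 0" using assms by (auto simp: cocycles_def)
  obtain b where b: "b \<in> supported (B i)" "proj i b = c" using proj_surj[OF c(1)] by blast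
  have "proj (Suc i) (dB i b) = 0" using proj_chain[OF b(1)] b(2) c(2) by simp
  then obtain a where a: "a \<in> supported (A i)" "incl i a = dB i b"
    using exact_middle additive_map_supported[OF dB_additive b(1)] by blast
  have "incl (Suc i) (dA i a) = 0" using incl_chain[OF a(1)] a(2) dB_dB[OF b(1)] by simp
  then have "dA i a = 0" using incl_kernel additive_map_supported[OF dA_additive a(1)] by blast
  then show ?thesis using a b by (auto simp: cocycles_def)
qed

lemma connecting_lift_unique:
  assumes c: "c \<in> supported (C i)" and c': "c' \<in> add_coset (BdC i) c"
    and a0: "a0 \<in> supported (A i)" "b0 \<in> supported (B i)" "proj i b0 = c" "incl i a0 = dB i b0"
    and a: "a \<in> supported (A i)" "b \<in> supported (B i)" "proj i b = c'" "incl i a = dB i b"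
  shows "a - a0 \<in> BdA i"
proof (cases i)
  case 0
  then have "proj i (b - b0) = 0"
    using c' a0 a additive_map_diff[OF proj_additive a(2) a0(2)] by (simp add: mem_add_coset_iff boundaries_def)
  then have "b = b0" using proj0_kernel[of "b - b0"] 0 a(2) a0(2) by simp
  then have "a = a0" using incl_injective a(1,4) a0(1,4) by metis
  then show ?thesis using add_subgroup_zero[OF BdA_subgroup] by simp
next
  case (Suc k)
  obtain y where y: "y \<in> supported (C k)" "c' - c = dC k y"
    using c' Suc by (auto simp: mem_add_coset_iff boundaries_def)
  obtain b' where b': "b' \<in> supported (B k)" "proj k b' = y" using proj_surj[OF y(1)] by blast
  have db': "dB k b' \<in> supported (B (Suc k))" using additive_map_supported[OF dB_additive b'(1)] .
  define z where "z = b - b0 - dB k b'"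
  have zB: "z \<in> supported (B (Suc k))" using a(2) a0(2) db' Suc by (simp add: z_def)
  have "proj (Suc k) z = 0"
    using additive_map_diff[OF proj_additive] a(2,3) a0(2,3) db' y b' proj_chain[OF b'(1)] Suc
    by (simp add: z_def)
  then obtain a'' where a'': "a'' \<in> supported (A k)" "incl k a'' = z" using exact_middle[OF zB] by blast
  have "incl (Suc k) (dA k a'') = dB (Suc k) z" using incl_chain[OF a''(1)] a''(2) by simp
  also have "\<dots> = dB (Suc k) b - dB (Suc k) b0 - dB (Suc k) (dB k b')"
    unfolding z_def using additive_map_diff[OF dB_additive] a(2) a0(2) db' Suc by (metis supported_diff)
  also have "\<dots> = incl (Suc k) (a - a0)"
    using a(1,4) a0(1,4) dB_dB[OF b'(1)] additive_map_diff[OF incl_additive] Suc by simp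
  finally have "a - a0 = dA k a''"
    using incl_injective a(1) a0(1) additive_map_supported[OF dA_additive a''(1)] Suc by (metis supported_diff)
  then show ?thesis using Suc a''(1) by (simp add: boundaries_def)
qed

lemma connecting_add_coset:
  assumes c: "c \<in> supported (C i)"
    and a0: "a0 \<in> supported (A i)" "b0 \<in> supported (B i)" "proj i b0 = c" "incl i a0 = dB i b0"
  shows "connecting i (add_coset (BdC i) c) = add_coset (BdA i) a0"
proof
  show "connecting i (add_coset (BdC i) c) \<subseteq> add_coset (BdA i) a0"
  proof
    fix x assume "x \<in> connecting i (add_coset (BdC i) c)"
    then obtain c' a b where ab: "c' \<in> add_coset (BdC i) c" "a \<in> supported (A i)" "b \<in> supported (B i)"
      "proj i b = c'" "incl i a = dB i b" "x \<in> add_coset (BdA i) a"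
      unfolding connecting_def by blast
    have "add_coset (BdA i) a = add_coset (BdA i) a0"
      using connecting_lift_unique[OF c ab(1) a0 ab(2-5)] add_coset_eq_iff[OF BdA_subgroup] by blast
    then show "x \<in> add_coset (BdA i) a0" using ab(6) by simp
  qed
  show "add_coset (BdA i) a0 \<subseteq> connecting i (add_coset (BdC i) c)"
    unfolding connecting_def using a0 add_coset_self[OF BdC_subgroup, of c] by blast
qed

lemma connecting_hom: "connecting i \<in> hom (HC i) (HA i)"
proof (rule hom_cohomologyI[OF BdC_subgroup BdA_subgroup])
  fix c assume c: "c \<in> ZC i"
  then obtain a b where "a \<in> ZA i" "b \<in> supported (B i)" "proj i b = c" "incl i a = dB i b"
    using connecting_lift_exists by blast
  then show "\<exists>y\<in>ZA i. connecting i (add_coset (BdC i) c) = add_coset (BdA i) y"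
    using connecting_add_coset c cocycles_supported by blast
next
  fix c c' y y' assume c: "c \<in> ZC i" "c' \<in> ZC i"
    and y: "connecting i (add_coset (BdC i) c) = add_coset (BdA i) y"
    and y': "connecting i (add_coset (BdC i) c') = add_coset (BdA i) y'"
  obtain a b where ab: "a \<in> ZA i" "b \<in> supported (B i)" "proj i b = c" "incl i a = dB i b"
    using connecting_lift_exists[OF c(1)] by blast
  obtain a' b' where ab': "a' \<in> ZA i" "b' \<in> supported (B i)" "proj i b' = c'" "incl i a' = dB i b'"
    using connecting_lift_exists[OF c(2)] by blast
  have "add_coset (BdA i) y = add_coset (BdA i) a" "add_coset (BdA i) y' = add_coset (BdA i) a'"
    using connecting_add_coset c ab ab' y y' cocycles_supported by metis+
  then have "(y - a) + (y' - a') \<in> BdA i"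
    using add_subgroup_add[OF BdA_subgroup] add_coset_eq_iff[OF BdA_subgroup] by blast
  then have sum: "add_coset (BdA i) (y + y') = add_coset (BdA i) (a + a')"
    using add_coset_eq_iff[OF BdA_subgroup] by (simp add: algebra_simps)
  have "proj i (b + b') = c + c'" "incl i (a + a') = dB i (b + b')"
    using additive_map_add[OF proj_additive ab(2) ab'(2)] additive_map_add[OF dB_additive ab(2) ab'(2)]
      additive_map_add[OF incl_additive cocycles_supported[OF ab(1)] cocycles_supported[OF ab'(1)]]
      ab ab' by simp_all
  then show "connecting i (add_coset (BdC i) (c + c')) = add_coset (BdA i) (y + y')"
    using connecting_add_coset[of "c + c'" i "a + a'" "b + b'"] sum c ab ab'
      cocycles_supported[of _ C dC i] cocycles_supported[of _ A dA i] by simp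
qed

lemma kernel_proj_map_0: "kernel (HB 0) (HC 0) (proj_map 0) = {\<one>\<^bsub>HB 0\<^esub>}"
proof -
  have "X = BdB 0" if X: "X \<in> carrier (HB 0)" "proj_map 0 X = BdC 0" for X
  proof -
    obtain b where b: "b \<in> ZB 0" "X = add_coset (BdB 0) b" using X(1) unfolding cohomology_carrier by blast
    have "add_coset (BdC 0) (proj 0 b) = BdC 0" using X b proj_map_add_coset cocycles_supported by metis
    then have "proj 0 b \<in> BdC 0" using add_coset_eq_subgroup_iff[OF BdC_subgroup] by blast
    then have "proj 0 b = 0" by (simp add: boundaries_def)
    then show "X = BdB 0" using proj0_kernel b cocycles_supported by fastforce
  qed
  moreover have "BdB 0 \<in> carrier (HB 0)"
    using add_coset_in_cohomology[of 0 B dB 0] additive_map_zero[OF dB_additive] by (simp add: cocycles_def)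
  moreover have "proj_map 0 (BdB 0) = BdC 0"
    using proj_map_add_coset[OF supported_zero, of 0] additive_map_zero[OF proj_additive] by simp
  ultimately show ?thesis unfolding kernel_cohomology cohomology_one by blast
qed

lemma proj_boundary_lift:
  assumes b: "b \<in> ZB (Suc i)" and pb: "proj (Suc i) b \<in> BdC (Suc i)"
  shows "\<exists>a\<in>ZA i. incl i a - b \<in> BdB (Suc i)"
proof -
  have bB: "b \<in> supported (B (Suc i))" and db: "dB (Suc i) b = 0" using b by (auto simp: cocycles_def)
  obtain y where y: "y \<in> supported (C i)" "proj (Suc i) b = dC i y" using pb by (auto simp: boundaries_def)
  obtain b' where b': "b' \<in> supported (B i)" "proj i b' = y" using proj_surj[OF y(1)] by blast
  have db': "dB i b' \<in> supported (B (Suc i))" using additive_map_supported[OF dB_additive b'(1)] .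
  define z where "z = b - dB i b'"
  have "proj (Suc i) z = 0"
    unfolding z_def using additive_map_diff[OF proj_additive bB db'] y b' proj_chain[OF b'(1)] by simp
  then obtain a where a: "a \<in> supported (A i)" "incl i a = z"
    using exact_middle[of z i] bB db' by (auto simp: z_def)
  have "incl (Suc i) (dA i a) = dB (Suc i) z" using incl_chain[OF a(1)] a(2) by simp
  also have "\<dots> = 0" unfolding z_def using additive_map_diff[OF dB_additive bB db'] db dB_dB[OF b'(1)] by simp
  finally have "a \<in> ZA i" using incl_kernel additive_map_supported[OF dA_additive a(1)] a(1)
    by (simp add: cocycles_def)
  moreover have "incl i a - b \<in> BdB (Suc i)"
    using a(2) dB_boundary[OF b'(1)] add_subgroup_uminus[OF BdB_subgroup] by (simp add: z_def)
  ultimately show ?thesis by blast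
qed

lemma kernel_proj_map_Suc: "kernel (HB (Suc i)) (HC (Suc i)) (proj_map (Suc i)) = incl_map i ` carrier (HA i)"
proof (intro equalityI subsetI)
  fix X assume "X \<in> kernel (HB (Suc i)) (HC (Suc i)) (proj_map (Suc i))"
  then obtain b where b: "b \<in> ZB (Suc i)" "X = add_coset (BdB (Suc i)) b"
    and pX: "proj_map (Suc i) X = BdC (Suc i)" unfolding kernel_cohomology cohomology_carrier by blast
  have "add_coset (BdC (Suc i)) (proj (Suc i) b) = BdC (Suc i)"
    using pX b proj_map_add_coset cocycles_supported by metis
  then obtain a where a: "a \<in> ZA i" "incl i a - b \<in> BdB (Suc i)"
    using proj_boundary_lift[OF b(1)] add_coset_eq_subgroup_iff[OF BdC_subgroup] by blast
  have "incl_map i (add_coset (BdA i) a) = X"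
    using incl_map_add_coset a cocycles_supported b(2) add_coset_eq_iff[OF BdB_subgroup] by metis
  then show "X \<in> incl_map i ` carrier (HA i)" using add_coset_in_cohomology[OF a(1)] by blast
next
  fix X assume "X \<in> incl_map i ` carrier (HA i)"
  then obtain a where a: "a \<in> ZA i" "X = incl_map i (add_coset (BdA i) a)" unfolding cohomology_carrier by blast
  have aA: "a \<in> supported (A i)" using a(1) by (rule cocycles_supported)
  have X: "X = add_coset (BdB (Suc i)) (incl i a)" using a(2) incl_map_add_coset[OF aA] by simp
  have "incl i a \<in> ZB (Suc i)" using incl_cocycles a(1) by blast
  moreover have "proj_map (Suc i) X = BdC (Suc i)"
    unfolding X using proj_map_add_coset additive_map_supported[OF incl_additive aA] proj_incl[OF aA] by simp
  ultimately show "X \<in> kernel (HB (Suc i)) (HC (Suc i)) (proj_map (Suc i))"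
    unfolding kernel_cohomology X using add_coset_in_cohomology by blast
qed

lemma connecting_boundary_lift:
  assumes c: "c \<in> ZC i" and a0: "a0 \<in> BdA i" and b0: "b0 \<in> supported (B i)" "proj i b0 = c" "incl i a0 = dB i b0"
  shows "\<exists>b\<in>ZB i. proj i b = c"
proof (cases i)
  case 0
  then have "dB i b0 = 0" using a0 b0(3) additive_map_zero[OF incl_additive] by (simp add: boundaries_def)
  then show ?thesis using b0 by (auto simp: cocycles_def)
next
  case (Suc k)
  then obtain a' where a': "a' \<in> supported (A k)" "a0 = dA k a'" using a0 by (auto simp: boundaries_def)
  have ia': "incl k a' \<in> supported (B i)" using additive_map_supported[OF incl_additive a'(1)] Suc by simp
  have "proj i (b0 - incl k a') = c"
    using additive_map_diff[OF proj_additive b0(1) ia'] b0(2) proj_incl[OF a'(1)] Suc by simp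
  moreover have "dB i (b0 - incl k a') = 0"
    using additive_map_diff[OF dB_additive b0(1) ia'] b0(3) a' incl_chain[OF a'(1)] Suc by simp
  ultimately show ?thesis using b0(1) ia' supported_diff unfolding cocycles_def by blast
qed

lemma kernel_connecting: "kernel (HC i) (HA i) (connecting i) = proj_map i ` carrier (HB i)"
proof (intro equalityI subsetI)
  fix X assume "X \<in> kernel (HC i) (HA i) (connecting i)"
  then obtain c where c: "c \<in> ZC i" "X = add_coset (BdC i) c" and gX: "connecting i X = BdA i"
    unfolding kernel_cohomology cohomology_carrier by blast
  obtain a0 b0 where ab: "a0 \<in> ZA i" "b0 \<in> supported (B i)" "proj i b0 = c" "incl i a0 = dB i b0"
    using connecting_lift_exists[OF c(1)] by blast
  have "add_coset (BdA i) a0 = BdA i"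
    using connecting_add_coset[OF cocycles_supported[OF c(1)] cocycles_supported[OF ab(1)] ab(2-4)] gX c(2)
    by simp
  then obtain b where b: "b \<in> ZB i" "proj i b = c"
    using connecting_boundary_lift[OF c(1) _ ab(2-4)] add_coset_eq_subgroup_iff[OF BdA_subgroup] by blast
  have "proj_map i (add_coset (BdB i) b) = X" using proj_map_add_coset cocycles_supported b c(2) by metis
  then show "X \<in> proj_map i ` carrier (HB i)" using add_coset_in_cohomology[OF b(1)] by blast
next
  fix X assume "X \<in> proj_map i ` carrier (HB i)"
  then obtain b where b: "b \<in> ZB i" "X = proj_map i (add_coset (BdB i) b)" unfolding cohomology_carrier by blast
  have bB: "b \<in> supported (B i)" and db: "dB i b = 0" using b(1) by (auto simp: cocycles_def)
  have X: "X = add_coset (BdC i) (proj i b)" using b(2) proj_map_add_coset[OF bB] by simp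
  have "connecting i X = add_coset (BdA i) 0"
    unfolding X using connecting_add_coset[OF additive_map_supported[OF proj_additive bB] supported_zero bB refl]
      additive_map_zero[OF incl_additive] db by simp
  then show "X \<in> kernel (HC i) (HA i) (connecting i)"
    unfolding kernel_cohomology X using add_coset_in_cohomology proj_cocycles b(1) by fastforce
qed

lemma kernel_incl_map: "kernel (HA i) (HB (Suc i)) (incl_map i) = connecting i ` carrier (HC i)"
proof (intro equalityI subsetI)
  fix X assume "X \<in> kernel (HA i) (HB (Suc i)) (incl_map i)"
  then obtain a where a: "a \<in> ZA i" "X = add_coset (BdA i) a" and iX: "incl_map i X = BdB (Suc i)"
    unfolding kernel_cohomology cohomology_carrier by blast
  have aA: "a \<in> supported (A i)" using a(1) by (rule cocycles_supported)
  have "incl i a \<in> BdB (Suc i)"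
    using iX a(2) incl_map_add_coset[OF aA] add_coset_eq_subgroup_iff[OF BdB_subgroup] by simp
  then obtain b where b: "b \<in> supported (B i)" "incl i a = dB i b" by (auto simp: boundaries_def)
  have "dC i (proj i b) = 0" using proj_chain[OF b(1)] b(2) proj_incl[OF aA] by simp
  then have cZ: "proj i b \<in> ZC i" using additive_map_supported[OF proj_additive b(1)] by (simp add: cocycles_def)
  have "connecting i (add_coset (BdC i) (proj i b)) = X"
    using connecting_add_coset[OF cocycles_supported[OF cZ] aA b(1) refl b(2)] a(2) by simp
  then show "X \<in> connecting i ` carrier (HC i)" using add_coset_in_cohomology[OF cZ] by blast
next
  fix X assume "X \<in> connecting i ` carrier (HC i)"
  then obtain c where c: "c \<in> ZC i" "X = connecting i (add_coset (BdC i) c)" unfolding cohomology_carrier by blast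
  obtain a0 b0 where ab: "a0 \<in> ZA i" "b0 \<in> supported (B i)" "proj i b0 = c" "incl i a0 = dB i b0"
    using connecting_lift_exists[OF c(1)] by blast
  have X: "X = add_coset (BdA i) a0"
    using connecting_add_coset[OF cocycles_supported[OF c(1)] cocycles_supported[OF ab(1)] ab(2-4)] c(2) by simp
  have "incl_map i X = BdB (Suc i)"
    unfolding X using incl_map_add_coset[OF cocycles_supported[OF ab(1)]] ab(4) dB_boundary[OF ab(2)]
      add_coset_eq_subgroup_iff[OF BdB_subgroup] by simp
  then show "X \<in> kernel (HA i) (HB (Suc i)) (incl_map i)"
    unfolding kernel_cohomology X using add_coset_in_cohomology[OF ab(1)] by blast
qed

theorem long_exact_sequence:
  "\<exists>\<beta> \<gamma> \<delta>.
     (\<forall>i. \<beta> i \<in> hom (HB i) (HC i)) \<and> (\<forall>i. \<gamma> i \<in> hom (HC i) (HA i)) \<and>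
     (\<forall>i. \<delta> i \<in> hom (HA i) (HB (Suc i))) \<and>
     kernel (HB 0) (HC 0) (\<beta> 0) = {\<one>\<^bsub>HB 0\<^esub>} \<and>
     (\<forall>i. kernel (HB (Suc i)) (HC (Suc i)) (\<beta> (Suc i)) = \<delta> i ` carrier (HA i)) \<and>
     (\<forall>i. kernel (HC i) (HA i) (\<gamma> i) = \<beta> i ` carrier (HB i)) \<and>
     (\<forall>i. kernel (HA i) (HB (Suc i)) (\<delta> i) = \<gamma> i ` carrier (HC i))"
  using proj_map_hom connecting_hom incl_map_hom kernel_proj_map_0 kernel_proj_map_Suc
    kernel_connecting kernel_incl_map by blast

end

section \<open>Components of spanning subgraphs\<close>

lemma adj_sym: "(x, y) \<in> adj G s \<Longrightarrow> (y, x) \<in> adj G s"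
  unfolding adj_def by blast

lemma adj_mono: "s \<subseteq> t \<Longrightarrow> adj G s \<subseteq> adj G t"
  unfolding adj_def by blast

lemma conn_rel_equiv: "equiv (verts G) (conn_rel G s)"
proof (rule equivI)
  show "refl_on (verts G) (conn_rel G s)" unfolding refl_on_def conn_rel_def by auto
  show "conn_rel G s \<subseteq> verts G \<times> verts G" unfolding conn_rel_def by auto
  have "sym (adj G s)" by (rule symI) (rule adj_sym)
  then have S: "sym ((adj G s)\<^sup>*)" by (rule sym_rtrancl)
  show "sym (conn_rel G s)"
  proof (rule symI)
    fix x y assume "(x, y) \<in> conn_rel G s"
    then have "x \<in> verts G" "y \<in> verts G" "(x, y) \<in> (adj G s)\<^sup>*" unfolding conn_rel_def by auto
    moreover have "(y, x) \<in> (adj G s)\<^sup>*" using symD[OF S] calculation(3) .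
    ultimately show "(y, x) \<in> conn_rel G s" unfolding conn_rel_def by simp
  qed
  show "trans (conn_rel G s)"
  proof (rule transI)
    fix x y z assume "(x, y) \<in> conn_rel G s" "(y, z) \<in> conn_rel G s"
    then have "x \<in> verts G" "z \<in> verts G" "(x, y) \<in> (adj G s)\<^sup>*" "(y, z) \<in> (adj G s)\<^sup>*"
      unfolding conn_rel_def by auto
    then show "(x, z) \<in> conn_rel G s" unfolding conn_rel_def using rtrancl_trans[of x y "adj G s" z] by simp
  qed
qed

lemma conn_rel_mono: "s \<subseteq> t \<Longrightarrow> conn_rel G s \<subseteq> conn_rel G t"
  unfolding conn_rel_def using rtrancl_mono[OF adj_mono] by blast

lemma comps_finite: "finite (verts G) \<Longrightarrow> finite (comps G s)"
  unfolding comps_def by (rule finite_quotient) (auto simp: conn_rel_def)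

lemma comps_nonempty: "X \<in> comps G s \<Longrightarrow> X \<noteq> {}"
  unfolding comps_def by (rule in_quotient_imp_non_empty[OF conn_rel_equiv])

lemma comps_subset_verts: "X \<in> comps G s \<Longrightarrow> X \<subseteq> verts G"
  unfolding comps_def by (rule in_quotient_imp_subset[OF conn_rel_equiv])

lemma comps_disjoint: "X \<in> comps G s \<Longrightarrow> Y \<in> comps G s \<Longrightarrow> X = Y \<or> X \<inter> Y = {}"
  unfolding comps_def by (rule quotient_disj[OF conn_rel_equiv])

lemma comps_eq_class: "X \<in> comps G s \<Longrightarrow> x \<in> X \<Longrightarrow> X = conn_rel G s `` {x}"
  unfolding comps_def
  by (metis Image_singleton_iff conn_rel_equiv equiv_class_eq_iff quotientE)

lemma class_in_comps: "x \<in> verts G \<Longrightarrow> conn_rel G s `` {x} \<in> comps G s"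
  unfolding comps_def by (rule quotientI)

lemma comps_overlap_subset:
  assumes "s \<subseteq> t" "Y \<in> comps G s" "Z \<in> comps G t" "Y \<inter> Z \<noteq> {}"
  shows "Y \<subseteq> Z"
proof -
  obtain w where w: "w \<in> Y" "w \<in> Z" using assms(4) by blast
  have Y: "Y = conn_rel G s `` {w}" using comps_eq_class[OF assms(2) w(1)] .
  have Z: "Z = conn_rel G t `` {w}" using comps_eq_class[OF assms(3) w(2)] .
  show ?thesis unfolding Y Z using conn_rel_mono[OF assms(1)] by blast
qed

lemma comps_Image_conn_rel:
  assumes st: "s \<subseteq> t" and X: "X \<in> comps G s"
  shows "conn_rel G t `` X \<in> comps G t \<and> X \<subseteq> conn_rel G t `` X"
proof -
  obtain x where x: "x \<in> X" using comps_nonempty[OF X] by blast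
  have xv: "x \<in> verts G" using comps_subset_verts[OF X] x by blast
  have Xe: "X = conn_rel G s `` {x}" by (rule comps_eq_class[OF X x])
  have "conn_rel G t `` X = conn_rel G t `` {x}"
  proof
    show "conn_rel G t `` {x} \<subseteq> conn_rel G t `` X" using x by blast
    show "conn_rel G t `` X \<subseteq> conn_rel G t `` {x}"
    proof
      fix y assume "y \<in> conn_rel G t `` X"
      then obtain x' where "x' \<in> X" "(x', y) \<in> conn_rel G t" by blast
      moreover have "(x, x') \<in> conn_rel G t" using \<open>x' \<in> X\<close> Xe conn_rel_mono[OF st] by blast
      ultimately show "y \<in> conn_rel G t `` {x}"
        using conn_rel_equiv[of G t] unfolding equiv_def trans_def by blast
    qed
  qed
  moreover have "X \<subseteq> conn_rel G t `` {x}" using Xe conn_rel_mono[OF st] by blast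
  ultimately show ?thesis using class_in_comps[OF xv, of t] by (simp only:)
qed

lemma comps_refined:
  assumes "s \<subseteq> t" "X \<in> comps G s"
  shows "\<exists>Z\<in>comps G t. X \<subseteq> Z"
  using comps_Image_conn_rel[OF assms] by blast

lemma comps_containing_unique:
  assumes "X \<in> comps G s" "Z \<in> comps G t" "Z' \<in> comps G t" "X \<subseteq> Z" "X \<subseteq> Z'"
  shows "Z = Z'"
  using comps_nonempty[OF assms(1)] comps_disjoint[OF assms(2,3)] assms(4,5) by blast

section \<open>Labels of enhanced states\<close>

text \<open>\<^const>\<open>ext_label\<close> and \<^const>\<open>ext_vanishes\<close> add one edge to \<open>s\<close>; here all edges of
  \<open>t - s\<close> are added at once. Adding edges in two rounds is the same as adding them in one
  (\<open>merge_label_trans\<close>, \<open>merge_vanishes_trans\<close>), which is why \<open>d\<^sub>b\<close> squares to zero.\<close>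

definition merge_label :: "('v, 'e) sgraph \<Rightarrow> 'e set \<Rightarrow> ('v set \<Rightarrow> bool) \<Rightarrow> 'e set \<Rightarrow> 'v set \<Rightarrow> bool" where
  "merge_label G s c t = (\<lambda>Z. Z \<in> comps G t \<and> (\<exists>X\<in>comps G s. X \<subseteq> Z \<and> c X))"

definition merge_vanishes :: "('v, 'e) sgraph \<Rightarrow> 'e set \<Rightarrow> ('v set \<Rightarrow> bool) \<Rightarrow> 'e set \<Rightarrow> bool" where
  "merge_vanishes G s c t \<longleftrightarrow> (\<exists>Z\<in>comps G t. card {X \<in> comps G s. X \<subseteq> Z \<and> c X} \<ge> 2)"

lemma ext_label_eq_merge_label: "ext_label G s c e' = merge_label G s c (insert e' s)"
  by (simp add: ext_label_def merge_label_def)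

lemma ext_vanishes_eq_merge_vanishes: "ext_vanishes G s c e' = merge_vanishes G s c (insert e' s)"
  by (simp add: ext_vanishes_def merge_vanishes_def)

lemma two_le_card_iff: "finite A \<Longrightarrow> (2 \<le> card A) = (\<exists>x\<in>A. \<exists>y\<in>A. x \<noteq> y)"
proof
  assume f: "finite A" and c: "2 \<le> card A"
  then obtain x where x: "x \<in> A" by fastforce
  have "card (A - {x}) \<ge> 1" using c x f by (simp add: card_Diff_singleton)
  then have "A - {x} \<noteq> {}" by (metis card.empty not_one_le_zero)
  then obtain y where "y \<in> A - {x}" by blast
  then show "\<exists>x\<in>A. \<exists>y\<in>A. x \<noteq> y" using x by blast
next
  assume f: "finite A" and "\<exists>x\<in>A. \<exists>y\<in>A. x \<noteq> y"
  then obtain x y where "x \<in> A" "y \<in> A" "x \<noteq> y" by blast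
  then have "card {x, y} \<le> card A" using f by (intro card_mono) auto
  then show "2 \<le> card A" using \<open>x \<noteq> y\<close> by simp
qed

lemma merge_vanishes_iff:
  assumes "finite (verts G)"
  shows "merge_vanishes G s c t \<longleftrightarrow> (\<exists>Z\<in>comps G t. \<exists>X1 X2. X1 \<in> comps G s \<and> X2 \<in> comps G s \<and> X1 \<noteq> X2 \<and>
      X1 \<subseteq> Z \<and> X2 \<subseteq> Z \<and> c X1 \<and> c X2)"
proof -
  have "finite {X \<in> comps G s. X \<subseteq> Z \<and> c X}" for Z using comps_finite[OF assms] by simp
  then have "(2 \<le> card {X \<in> comps G s. X \<subseteq> Z \<and> c X}) = (\<exists>X1 X2. X1 \<in> comps G s \<and> X2 \<in> comps G s \<and> X1 \<noteq> X2 \<and>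
      X1 \<subseteq> Z \<and> X2 \<subseteq> Z \<and> c X1 \<and> c X2)" for Z
    using two_le_card_iff[of "{X \<in> comps G s. X \<subseteq> Z \<and> c X}"] by auto
  then show ?thesis unfolding merge_vanishes_def by simp
qed

lemma merge_vanishesI: "finite (verts G) \<Longrightarrow> Z \<in> comps G t \<Longrightarrow> X1 \<in> comps G s \<Longrightarrow> X2 \<in> comps G s \<Longrightarrow> X1 \<noteq> X2 \<Longrightarrow>
   X1 \<subseteq> Z \<Longrightarrow> X2 \<subseteq> Z \<Longrightarrow> c X1 \<Longrightarrow> c X2 \<Longrightarrow> merge_vanishes G s c t"
  unfolding merge_vanishes_iff by blast

lemma merge_vanishesE: assumes "finite (verts G)" "merge_vanishes G s c t"
  obtains Z X1 X2 where "Z \<in> comps G t" "X1 \<in> comps G s" "X2 \<in> comps G s" "X1 \<noteq> X2"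
   "X1 \<subseteq> Z" "X2 \<subseteq> Z" "c X1" "c X2"
  using assms unfolding merge_vanishes_iff[OF assms(1)] by blast

lemma merge_label_trans:
  assumes "s \<subseteq> t" "t \<subseteq> u"
  shows "merge_label G t (merge_label G s c t) u = merge_label G s c u"
proof (rule ext)
  fix Z
  show "merge_label G t (merge_label G s c t) u Z = merge_label G s c u Z"
  proof
    assume "merge_label G t (merge_label G s c t) u Z"
    then obtain Y X where "Z \<in> comps G u" "Y \<in> comps G t" "Y \<subseteq> Z" "X \<in> comps G s" "X \<subseteq> Y" "c X"
      unfolding merge_label_def by blast
    then show "merge_label G s c u Z" unfolding merge_label_def by blast
  next
    assume "merge_label G s c u Z"
    then obtain X where X: "Z \<in> comps G u" "X \<in> comps G s" "X \<subseteq> Z" "c X" unfolding merge_label_def by blast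
    obtain Y where Y: "Y \<in> comps G t" "X \<subseteq> Y" using comps_refined[OF assms(1) X(2)] by blast
    have "Y \<inter> Z \<noteq> {}" using Y(2) X(3) comps_nonempty[OF X(2)] by blast
    then have "Y \<subseteq> Z" using comps_overlap_subset[OF assms(2) Y(1) X(1)] by blast
    then show "merge_label G t (merge_label G s c t) u Z" unfolding merge_label_def using X Y by blast
  qed
qed

lemma merge_vanishes_trans:
  assumes fin: "finite (verts G)" and st: "s \<subseteq> t" and tu: "t \<subseteq> u"
  shows "(\<not> merge_vanishes G s c t \<and> \<not> merge_vanishes G t (merge_label G s c t) u) \<longleftrightarrow> \<not> merge_vanishes G s c u"
proof -
  have vanish_first: "merge_vanishes G s c u" if hA: "merge_vanishes G s c t"
  proof -
    obtain Y X1 X2 where h: "Y \<in> comps G t" "X1 \<in> comps G s" "X2 \<in> comps G s" "X1 \<noteq> X2"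
      "X1 \<subseteq> Y" "X2 \<subseteq> Y" "c X1" "c X2" using merge_vanishesE[OF fin hA] by blast
    obtain Z where Z: "Z \<in> comps G u" "Y \<subseteq> Z" using comps_refined[OF tu h(1)] by blast
    show ?thesis using h Z by (intro merge_vanishesI[OF fin Z(1) h(2,3,4)]) auto
  qed
  have vanish_second: "merge_vanishes G s c u" if hB: "merge_vanishes G t (merge_label G s c t) u"
  proof -
    obtain Z Y1 Y2 where h: "Z \<in> comps G u" "Y1 \<in> comps G t" "Y2 \<in> comps G t" "Y1 \<noteq> Y2"
      "Y1 \<subseteq> Z" "Y2 \<subseteq> Z" "merge_label G s c t Y1" "merge_label G s c t Y2" using merge_vanishesE[OF fin hB] by blast
    obtain X1 where X1: "X1 \<in> comps G s" "X1 \<subseteq> Y1" "c X1" using h(7) unfolding merge_label_def by blast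
    obtain X2 where X2: "X2 \<in> comps G s" "X2 \<subseteq> Y2" "c X2" using h(8) unfolding merge_label_def by blast
    have "Y1 \<inter> Y2 = {}" using comps_disjoint[OF h(2,3)] h(4) by blast
    then have "X1 \<noteq> X2" using X1(2) X2(2) comps_nonempty[OF X1(1)] by blast
    then show ?thesis using h X1 X2 by (intro merge_vanishesI[OF fin h(1) X1(1) X2(1)]) auto
  qed
  have vanish_split: "merge_vanishes G s c t \<or> merge_vanishes G t (merge_label G s c t) u" if hC: "merge_vanishes G s c u"
  proof -
    obtain Z X1 X2 where h: "Z \<in> comps G u" "X1 \<in> comps G s" "X2 \<in> comps G s" "X1 \<noteq> X2"
      "X1 \<subseteq> Z" "X2 \<subseteq> Z" "c X1" "c X2" using merge_vanishesE[OF fin hC] by blast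
    obtain Y1 where Y1: "Y1 \<in> comps G t" "X1 \<subseteq> Y1" using comps_refined[OF st h(2)] by blast
    obtain Y2 where Y2: "Y2 \<in> comps G t" "X2 \<subseteq> Y2" using comps_refined[OF st h(3)] by blast
    have "Y1 \<inter> Z \<noteq> {}" using Y1(2) h(5) comps_nonempty[OF h(2)] by blast
    then have Y1Z: "Y1 \<subseteq> Z" using comps_overlap_subset[OF tu Y1(1) h(1)] by blast
    have "Y2 \<inter> Z \<noteq> {}" using Y2(2) h(6) comps_nonempty[OF h(3)] by blast
    then have Y2Z: "Y2 \<subseteq> Z" using comps_overlap_subset[OF tu Y2(1) h(1)] by blast
    show ?thesis
    proof (cases "Y1 = Y2")
      case True
      then have "merge_vanishes G s c t" using h Y1 Y2 by (intro merge_vanishesI[OF fin Y1(1) h(2,3,4)]) auto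
      then show ?thesis by blast
    next
      case False
      have "merge_label G s c t Y1" "merge_label G s c t Y2" unfolding merge_label_def using Y1 Y2 h by blast+
      then have "merge_vanishes G t (merge_label G s c t) u" using Y1Z Y2Z by (intro merge_vanishesI[OF fin h(1) Y1(1) Y2(1) False])
      then show ?thesis by blast
    qed
  qed
  show ?thesis using vanish_first vanish_second vanish_split by blast
qed

lemma card_merge_label:
  assumes fin: "finite (verts G)" and st: "s \<subseteq> t" and nv: "\<not> merge_vanishes G s c t"
  shows "card {Z \<in> comps G t. merge_label G s c t Z} = card {X \<in> comps G s. c X}"
proof -
  define g where "g X = conn_rel G t `` X" for X
  have g: "g X \<in> comps G t \<and> X \<subseteq> g X" if "X \<in> comps G s" for X
    unfolding g_def by (rule comps_Image_conn_rel[OF st that])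
  have eq: "{Z \<in> comps G t. merge_label G s c t Z} = g ` {X \<in> comps G s. c X}"
  proof
    show "{Z \<in> comps G t. merge_label G s c t Z} \<subseteq> g ` {X \<in> comps G s. c X}"
    proof
      fix Z assume "Z \<in> {Z \<in> comps G t. merge_label G s c t Z}"
      then obtain X where X: "Z \<in> comps G t" "X \<in> comps G s" "X \<subseteq> Z" "c X" unfolding merge_label_def by blast
      have "g X = Z" using comps_containing_unique[OF X(2) _ X(1)] g[OF X(2)] X(3) by blast
      then show "Z \<in> g ` {X \<in> comps G s. c X}" using X by blast
    qed
    show "g ` {X \<in> comps G s. c X} \<subseteq> {Z \<in> comps G t. merge_label G s c t Z}"
      unfolding merge_label_def using g by blast
  qed
  have inj: "inj_on g {X \<in> comps G s. c X}"
  proof (rule inj_onI)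
    fix X1 X2 assume X1: "X1 \<in> {X \<in> comps G s. c X}" and X2: "X2 \<in> {X \<in> comps G s. c X}" and e: "g X1 = g X2"
    show "X1 = X2"
    proof (rule ccontr)
      assume "X1 \<noteq> X2"
      moreover have "g X1 \<in> comps G t" "X1 \<subseteq> g X1" "X2 \<subseteq> g X1" using g[of X1] g[of X2] X1 X2 e by auto
      moreover have "X1 \<in> comps G s" "X2 \<in> comps G s" "c X1" "c X2" using X1 X2 by auto
      ultimately have "merge_vanishes G s c t" using \<open>X1 \<noteq> X2\<close> by (intro merge_vanishesI[OF fin]) 
      then show False using nv by blast
    qed
  qed
  show ?thesis unfolding eq using card_image[OF inj] .
qed

section \<open>The balanced differential squares to zero\<close>

lemma circuit_mono: "t \<subseteq> s \<Longrightarrow> circuit G t es vs \<Longrightarrow> circuit G s es vs"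
  unfolding circuit_def by blast

lemma balanced_subset: "t \<subseteq> s \<Longrightarrow> balanced G s \<Longrightarrow> balanced G t"
  unfolding balanced_def using circuit_mono by blast

lemma bstates_finite:
  assumes wf: "wf_sgraph G"
  shows "finite (bstates G i j)"
proof -
  have fE: "finite (edges G)" and fV: "finite (verts G)" using wf by (auto simp: wf_sgraph_def)
  let ?M = "\<Union>s\<in>Pow (edges G). (\<lambda>C. (s, \<lambda>X. X \<in> C)) ` Pow (comps G s)"
  have "bstates G i j \<subseteq> ?M"
  proof
    fix S assume "S \<in> bstates G i j"
    then obtain s c where S: "S = (s, c)" "s \<subseteq> edges G" "\<forall>X. X \<notin> comps G s \<longrightarrow> \<not> c X"
      unfolding bstates_def by blast
    have "c = (\<lambda>X. X \<in> {X \<in> comps G s. c X})" using S(3) by auto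
    moreover have "{X \<in> comps G s. c X} \<in> Pow (comps G s)" by blast
    ultimately show "S \<in> ?M" using S(1,2) by blast
  qed
  moreover have "finite ?M" using fE comps_finite[OF fV] by auto
  ultimately show ?thesis by (rule finite_subset)
qed

definition edge_sign :: "'e::linorder set \<Rightarrow> 'e \<Rightarrow> int" where
  "edge_sign s e' = (-1) ^ card {f \<in> s. f < e'}"

lemma edge_sign_insert:
  assumes "finite s" "e1 \<notin> s"
  shows "edge_sign (insert e1 s) e2 = (if e1 < e2 then - edge_sign s e2 else edge_sign s e2)"
proof (cases "e1 < e2")
  case True
  have "{f \<in> insert e1 s. f < e2} = insert e1 {f \<in> s. f < e2}" using True by auto
  moreover have "card (insert e1 {f \<in> s. f < e2}) = Suc (card {f \<in> s. f < e2})"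
    using assms by simp
  ultimately show ?thesis using True by (simp add: edge_sign_def)
next
  case False
  have "{f \<in> insert e1 s. f < e2} = {f \<in> s. f < e2}" using False by auto
  then show ?thesis using False by (simp add: edge_sign_def)
qed

lemma edge_sign_swap:
  assumes "finite s" "e1 \<notin> s" "e2 \<notin> s" "e1 \<noteq> e2"
  shows "edge_sign s e2 * edge_sign (insert e2 s) e1 = - (edge_sign s e1 * edge_sign (insert e1 s) e2)"
  using edge_sign_insert[OF assms(1,2), of e2] edge_sign_insert[OF assms(1,3), of e1] assms(4)
  by (cases "e1 < e2") (auto simp: not_less_iff_gr_or_eq)

lemma dcoef_eq:
  "dcoef G S T = (\<Sum>e'\<in>edges G - fst S.
      if balanced G (fst T) \<and> \<not> merge_vanishes G (fst S) (snd S) (insert e' (fst S)) \<and>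
         T = (insert e' (fst S), merge_label G (fst S) (snd S) (insert e' (fst S)))
      then edge_sign (fst S) e' else 0)"
  unfolding dcoef_def ext_label_eq_merge_label ext_vanishes_eq_merge_vanishes edge_sign_def
  by (cases "balanced G (fst T)") simp_all

lemma sum_antisym_pairs:
  fixes F :: "'a \<Rightarrow> 'a \<Rightarrow> int"
  assumes "finite A" "\<And>e1 e2. e1 \<in> A \<Longrightarrow> e2 \<in> A \<Longrightarrow> e1 \<noteq> e2 \<Longrightarrow> F e2 e1 = - F e1 e2"
  shows "(\<Sum>e1\<in>A. \<Sum>e2\<in>A - {e1}. F e1 e2) = 0"
proof -
  let ?S = "Sigma A (\<lambda>e1. A - {e1})"
  have fS: "finite ?S" using assms(1) by auto
  have "(\<Sum>e1\<in>A. \<Sum>e2\<in>A - {e1}. F e1 e2) = (\<Sum>(x,y)\<in>?S. F x y)"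
    by (rule sum.Sigma) (use assms(1) in auto)
  also have "\<dots> = (\<Sum>p\<in>?S. F (fst p) (snd p))" by (simp add: split_def)
  finally have eq1: "(\<Sum>e1\<in>A. \<Sum>e2\<in>A - {e1}. F e1 e2) = (\<Sum>p\<in>?S. F (fst p) (snd p))" .
  have "(\<Sum>p\<in>?S. F (fst p) (snd p)) = (\<Sum>p\<in>?S. F (snd p) (fst p))"
    by (rule sum.reindex_bij_witness[where i = prod.swap and j = prod.swap]) auto
  also have "\<dots> = (\<Sum>p\<in>?S. - F (fst p) (snd p))"
    by (rule sum.cong) (auto intro: assms(2))
  also have "\<dots> = - (\<Sum>p\<in>?S. F (fst p) (snd p))" by (simp add: sum_negf)
  finally show ?thesis using eq1 by simp
qed

lemma sum_dcoef_mult: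
  assumes wf: "wf_sgraph G" and S: "(s, c) \<in> bstates G i j"
  shows "(\<Sum>T\<in>bstates G (Suc i) j. dcoef G (s, c) T * h T) =
    (\<Sum>e1\<in>edges G - s. if balanced G (insert e1 s) \<and> \<not> merge_vanishes G s c (insert e1 s)
       then edge_sign s e1 * h (insert e1 s, merge_label G s c (insert e1 s)) else 0)"
proof -
  have fV: "finite (verts G)" and fE: "finite (edges G)" using wf by (auto simp: wf_sgraph_def)
  have sE: "s \<subseteq> edges G" and cs: "card s = i" and xs: "xdeg G (s, c) = j"
    using S unfolding bstates_def by auto
  have fs: "finite s" using sE fE finite_subset by blast
  define N where "N e1 = (insert e1 s, merge_label G s c (insert e1 s))" for e1
  define Q where "Q e1 \<longleftrightarrow> balanced G (insert e1 s) \<and> \<not> merge_vanishes G s c (insert e1 s)" for e1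
  have NB: "N e1 \<in> bstates G (Suc i) j" if e1: "e1 \<in> edges G - s" and q: "Q e1" for e1
  proof -
    have "xdeg G (N e1) = j"
      using card_merge_label[OF fV, of s "insert e1 s" c] q xs unfolding Q_def N_def xdeg_def by auto
    then show ?thesis
      using q e1 sE fs cs unfolding N_def Q_def bstates_def merge_label_def by auto
  qed
  have "(\<Sum>T\<in>bstates G (Suc i) j. dcoef G (s, c) T * h T)
      = (\<Sum>T\<in>bstates G (Suc i) j. \<Sum>e1\<in>edges G - s. if T = N e1 \<and> Q e1 then edge_sign s e1 * h T else 0)"
    unfolding dcoef_eq fst_conv snd_conv sum_distrib_right
    by (intro sum.cong refl) (auto simp: N_def Q_def)
  also have "\<dots> = (\<Sum>e1\<in>edges G - s. \<Sum>T\<in>bstates G (Suc i) j. if T = N e1 \<and> Q e1 then edge_sign s e1 * h T else 0)"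
    by (rule sum.swap)
  also have "\<dots> = (\<Sum>e1\<in>edges G - s. if Q e1 then edge_sign s e1 * h (N e1) else 0)"
    using NB bstates_finite[OF wf] by (intro sum.cong refl) (auto simp: sum.delta)
  finally show ?thesis unfolding N_def Q_def .
qed

lemma dcoef_merge_step:
  assumes fV: "finite (verts G)" and nv: "\<not> merge_vanishes G s c (insert e1 s)"
  shows "dcoef G (insert e1 s, merge_label G s c (insert e1 s)) U =
    (\<Sum>e2\<in>edges G - insert e1 s. if balanced G (fst U) \<and> \<not> merge_vanishes G s c (insert e1 (insert e2 s)) \<and>
       U = (insert e1 (insert e2 s), merge_label G s c (insert e1 (insert e2 s)))
     then edge_sign (insert e1 s) e2 else 0)"
  unfolding dcoef_eq fst_conv snd_conv
proof (intro sum.cong refl)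
  fix e2
  have chain: "s \<subseteq> insert e1 s" "insert e1 s \<subseteq> insert e2 (insert e1 s)" by blast+
  show "(if balanced G (fst U) \<and> \<not> merge_vanishes G (insert e1 s) (merge_label G s c (insert e1 s)) (insert e2 (insert e1 s)) \<and>
        U = (insert e2 (insert e1 s), merge_label G (insert e1 s) (merge_label G s c (insert e1 s)) (insert e2 (insert e1 s)))
      then edge_sign (insert e1 s) e2 else 0) =
    (if balanced G (fst U) \<and> \<not> merge_vanishes G s c (insert e1 (insert e2 s)) \<and>
        U = (insert e1 (insert e2 s), merge_label G s c (insert e1 (insert e2 s)))
      then edge_sign (insert e1 s) e2 else 0)"
    using merge_label_trans[OF chain, of G c] merge_vanishes_trans[OF fV chain, of c] nv
    by (simp add: insert_commute)
qed

text \<open>The terms of \<open>d\<^sub>b (d\<^sub>b S)\<close> are indexed by ordered pairs of new edges; the two orders give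
  the same state with opposite signs.\<close>

lemma dcoef_dcoef_sum:
  assumes wf: "wf_sgraph G" and S: "S \<in> bstates G i j"
  shows "(\<Sum>T\<in>bstates G (Suc i) j. dcoef G S T * dcoef G T U) = 0"
proof -
  have fV: "finite (verts G)" and fE: "finite (edges G)" using wf by (auto simp: wf_sgraph_def)
  obtain s c where Sd: "S = (s, c)" by (cases S)
  have fs: "finite s" using S fE finite_subset unfolding Sd bstates_def by auto
  define P where "P e1 e2 \<longleftrightarrow> balanced G (fst U) \<and> \<not> merge_vanishes G s c (insert e1 (insert e2 s)) \<and>
      U = (insert e1 (insert e2 s), merge_label G s c (insert e1 (insert e2 s)))" for e1 e2
  define F where "F e1 e2 = (if P e1 e2 then edge_sign s e1 * edge_sign (insert e1 s) e2 else 0)" for e1 e2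
  have P_first_step: "balanced G (insert e1 s) \<and> \<not> merge_vanishes G s c (insert e1 s)" if "P e1 e2" for e1 e2
  proof -
    have chain: "s \<subseteq> insert e1 s" "insert e1 s \<subseteq> insert e1 (insert e2 s)" by blast+
    show ?thesis using that balanced_subset[OF chain(2)] merge_vanishes_trans[OF fV chain, of c]
      unfolding P_def by auto
  qed
  have "(\<Sum>T\<in>bstates G (Suc i) j. dcoef G S T * dcoef G T U)
      = (\<Sum>e1\<in>edges G - s. \<Sum>e2\<in>(edges G - s) - {e1}. F e1 e2)"
    unfolding Sd sum_dcoef_mult[OF wf S[unfolded Sd]]
  proof (intro sum.cong refl)
    fix e1
    show "(if balanced G (insert e1 s) \<and> \<not> merge_vanishes G s c (insert e1 s)
        then edge_sign s e1 * dcoef G (insert e1 s, merge_label G s c (insert e1 s)) U else 0)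
      = (\<Sum>e2\<in>(edges G - s) - {e1}. F e1 e2)"
    proof (cases "balanced G (insert e1 s) \<and> \<not> merge_vanishes G s c (insert e1 s)")
      case True
      have E: "edges G - insert e1 s = (edges G - s) - {e1}" by blast
      have "edge_sign s e1 * dcoef G (insert e1 s, merge_label G s c (insert e1 s)) U
          = (\<Sum>e2\<in>(edges G - s) - {e1}. F e1 e2)"
        unfolding dcoef_merge_step[OF fV conjunct2[OF True]] E sum_distrib_left
        by (intro sum.cong refl) (auto simp: F_def P_def)
      then show ?thesis using True by simp
    next
      case False
      then have "F e1 e2 = 0" for e2 using P_first_step unfolding F_def by meson
      then show ?thesis using False by auto
    qed
  qed
  also have "\<dots> = 0"
  proof (rule sum_antisym_pairs)
    show "finite (edges G - s)" using fE by simp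
    fix e1 e2 assume e: "e1 \<in> edges G - s" "e2 \<in> edges G - s" "e1 \<noteq> e2"
    have "P e2 e1 = P e1 e2" unfolding P_def by (simp add: insert_commute)
    then show "F e2 e1 = - F e1 e2" unfolding F_def using edge_sign_swap[OF fs _ _ e(3)] e by auto
  qed
  finally show ?thesis .
qed

lemma dmap_additive: "additive_map (bstates G n j) (bstates G (Suc n) j) (dmap G n j)"
  unfolding additive_map_def supported_def dmap_def
  by (auto simp: fun_eq_iff sum.distrib distrib_right)

lemma dmap_dmap:
  fixes G :: "('v, 'e::linorder) sgraph"
  assumes wf: "wf_sgraph G" and f: "f \<in> supported (bstates G i j)"
  shows "dmap G (Suc i) j (dmap G i j f) = 0"
proof (rule ext)
  fix U
  show "dmap G (Suc i) j (dmap G i j f) U = 0 U"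
  proof (cases "U \<in> bstates G (Suc (Suc i)) j")
    case False then show ?thesis by (simp add: dmap_def)
  next
    case True
    have "dmap G (Suc i) j (dmap G i j f) U
        = (\<Sum>T\<in>bstates G (Suc i) j. (\<Sum>S\<in>bstates G i j. f S * dcoef G S T) * dcoef G T U)"
      using True by (simp add: dmap_def)
    also have "\<dots> = (\<Sum>T\<in>bstates G (Suc i) j. \<Sum>S\<in>bstates G i j. f S * (dcoef G S T * dcoef G T U))"
      by (simp add: sum_distrib_right mult.assoc)
    also have "\<dots> = (\<Sum>S\<in>bstates G i j. \<Sum>T\<in>bstates G (Suc i) j. f S * (dcoef G S T * dcoef G T U))"
      by (rule sum.swap)
    also have "\<dots> = (\<Sum>S\<in>bstates G i j. f S * (\<Sum>T\<in>bstates G (Suc i) j. dcoef G S T * dcoef G T U))"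
      by (simp add: sum_distrib_left)
    also have "\<dots> = 0" using dcoef_dcoef_sum[OF wf] by simp
    finally show ?thesis by simp
  qed
qed

section \<open>Balance via closed walks\<close>

fun walk :: "('v, 'e) sgraph \<Rightarrow> 'e set \<Rightarrow> ('v \<times> 'e \<times> 'v) list \<Rightarrow> 'v \<Rightarrow> 'v \<Rightarrow> bool" where
  "walk G s [] u w = (u = w)"
| "walk G s ((x, f, y) # L) u w = (x = u \<and> f \<in> s \<and> (ends G f = (x, y) \<or> ends G f = (y, x)) \<and> walk G s L y w)"

definition walk_sign :: "('v, 'e) sgraph \<Rightarrow> ('v \<times> 'e \<times> 'v) list \<Rightarrow> int" where
  "walk_sign G L = prod_list (map (\<lambda>(x, f, y). sgn G f) L)"

lemma walk_sign_Nil[simp]: "walk_sign G [] = 1" by (simp add: walk_sign_def)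
lemma walk_sign_Cons[simp]: "walk_sign G ((x, f, y) # L) = sgn G f * walk_sign G L" by (simp add: walk_sign_def)
lemma walk_sign_append: "walk_sign G (L1 @ L2) = walk_sign G L1 * walk_sign G L2" by (simp add: walk_sign_def)

lemma walk_append: "walk G s (L1 @ L2) u w \<longleftrightarrow> (\<exists>m. walk G s L1 u m \<and> walk G s L2 m w)"
proof (induction L1 arbitrary: u)
  case Nil then show ?case by simp
next
  case (Cons st L1)
  obtain x f y where st: "st = (x, f, y)" by (cases st)
  show ?case unfolding st using Cons.IH by auto
qed

lemma walk_hd: "walk G s L u w \<Longrightarrow> L \<noteq> [] \<Longrightarrow> fst (hd L) = u"
  by (cases L) auto

lemma walk_nth:
  "walk G s L u w \<Longrightarrow> i < length L \<Longrightarrow> L ! i = (x, f, y) \<Longrightarrow>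
    f \<in> s \<and> (ends G f = (x, y) \<or> ends G f = (y, x)) \<and> y = (if Suc i < length L then fst (L ! Suc i) else w)"
proof (induction L arbitrary: u i)
  case Nil then show ?case by simp
next
  case (Cons st L)
  obtain x' f' y' where st: "st = (x', f', y')" by (cases st)
  show ?case
  proof (cases i)
    case 0
    then show ?thesis using Cons.prems st by (cases L) auto
  next
    case (Suc i')
    then show ?thesis using Cons.prems Cons.IH[of y' i'] st by auto
  qed
qed

definition neg_closed_walk :: "('v, 'e) sgraph \<Rightarrow> 'e set \<Rightarrow> bool" where
  "neg_closed_walk G s \<longleftrightarrow> (\<exists>L v. L \<noteq> [] \<and> walk G s L v v \<and> walk_sign G L = -1)"

lemma circuit_walk_from:
  assumes c: "circuit G s es vs" and m: "m < length es"
  shows "walk G s (map (\<lambda>i. (vs ! i, es ! i, vs ! (Suc i mod length es))) [m..<length es]) (vs ! m) (vs ! 0)"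
  using m
proof (induction "length es - m" arbitrary: m)
  case 0 then show ?case by simp
next
  case (Suc d)
  define k where "k = length es"
  have "es ! m \<in> s" using c Suc.prems unfolding circuit_def by (metis nth_mem subsetD)
  moreover have "ends G (es ! m) = (vs ! m, vs ! (Suc m mod k)) \<or> ends G (es ! m) = (vs ! (Suc m mod k), vs ! m)"
    using c Suc.prems unfolding circuit_def k_def by (metis doubleton_eq_iff prod.collapse)
  moreover have "[m..<k] = m # [Suc m..<k]" using Suc.prems upt_conv_Cons unfolding k_def by blast
  moreover have "walk G s (map (\<lambda>i. (vs ! i, es ! i, vs ! (Suc i mod k))) [Suc m..<k]) (vs ! (Suc m mod k)) (vs ! 0)"
  proof (cases "Suc m = k")
    case False
    then show ?thesis using Suc.hyps(1)[of "Suc m"] Suc.hyps(2) Suc.prems unfolding k_def by simp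
  qed simp
  ultimately show ?case unfolding k_def by simp
qed

lemma neg_circuit_neg_closed_walk:
  assumes c: "circuit G s es vs" and neg: "prod_list (map (sgn G) es) = -1"
  shows "neg_closed_walk G s"
proof -
  define L where "L = map (\<lambda>i. (vs ! i, es ! i, vs ! (Suc i mod length es))) [0..<length es]"
  have "0 < length es" using c unfolding circuit_def by (elim conjE) linarith
  then have "walk G s L (vs ! 0) (vs ! 0)" "L \<noteq> []"
    using circuit_walk_from[OF c, of 0] unfolding L_def by simp_all
  moreover have "walk_sign G L = prod_list (map (sgn G) (map ((!) es) [0..<length es]))"
    unfolding L_def walk_sign_def by (simp add: comp_def)
  ultimately show ?thesis using neg unfolding neg_closed_walk_def map_nth by (intro exI conjI) simp_all
qed

lemma take_drop_split: "i \<le> j \<Longrightarrow> L = take i L @ take (j - i) (drop i L) @ drop j L"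
  by (metis append_take_drop_id drop_drop le_add_diff_inverse2)

lemma repeated_cyclic_pair:
  assumes dvs: "distinct vs" and ij: "i < j" "j < length vs"
    and eq: "{vs ! i, vs ! (Suc i mod length vs)} = {vs ! j, vs ! (Suc j mod length vs)}"
  shows "length vs = 2 \<and> i = 0 \<and> j = 1"
proof -
  define k where "k = length vs"
  have k0: "0 < k" using ij unfolding k_def by linarith
  have "vs ! i \<noteq> vs ! j" using dvs ij nth_eq_iff_index_eq by fastforce
  then have "vs ! i = vs ! (Suc j mod k)" "vs ! (Suc i mod k) = vs ! j"
    using eq by (auto simp: doubleton_eq_iff k_def)
  moreover have "Suc j mod k < k" "Suc i mod k < k" using k0 by simp_all
  ultimately have "i = Suc j mod k" "Suc i mod k = j"
    using nth_eq_iff_index_eq[OF dvs] ij by (auto simp: k_def)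
  then show ?thesis using ij unfolding k_def[symmetric]
    by (cases "Suc j < k") (auto simp: mod_if split: if_splits)
qed

lemma closed_walk_distinct_circuit:
  assumes L: "L \<noteq> []" "walk G s L v v" "distinct (map fst L)" and neg: "walk_sign G L = -1"
  shows "circuit G s (map (fst \<circ> snd) L) (map fst L)"
proof -
  define es where "es = map (fst \<circ> snd) L"
  define vs where "vs = map fst L"
  define k where "k = length L"
  have len: "length es = k" "length vs = k" and k1: "k \<ge> 1"
    using L(1) unfolding es_def vs_def k_def by (simp_all add: Suc_le_eq)
  have dvs: "distinct vs" using L(3) unfolding vs_def .
  have step: "es ! i \<in> s \<and> {fst (ends G (es ! i)), snd (ends G (es ! i))} = {vs ! i, vs ! (Suc i mod k)}"
    if i: "i < k" for i
  proof -
    obtain x f y where xfy: "L ! i = (x, f, y)" by (cases "L ! i") auto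
    have w: "f \<in> s" "ends G f = (x, y) \<or> ends G f = (y, x)" "y = (if Suc i < k then fst (L ! Suc i) else v)"
      using walk_nth[OF L(2) _ xfy] i unfolding k_def by blast+
    have "fst (L ! 0) = v" using walk_hd[OF L(2,1)] L(1) by (simp add: hd_conv_nth)
    then have "vs ! (Suc i mod k) = y" using w(3) i k1 unfolding vs_def k_def by (auto simp: mod_if)
    moreover have "es ! i = f" "vs ! i = x" using xfy i unfolding es_def vs_def k_def by simp_all
    ultimately show ?thesis using w(1,2) by auto
  qed
  have "distinct es"
  proof (rule ccontr)
    assume "\<not> distinct es"
    then obtain i j where ij: "i < j" "j < k" "es ! i = es ! j"
      using len by (metis distinct_conv_nth linorder_neqE_nat)
    then have "k = 2 \<and> i = 0 \<and> j = 1"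
      using repeated_cyclic_pair[OF dvs, of i j] step[of i] step[of j] len by simp
    then have es2: "es = [es ! 0, es ! 0]" using ij len by (simp add: list_eq_iff_nth_eq less_2_cases_iff)
    have "walk_sign G L = prod_list (map (sgn G) es)"
      unfolding es_def walk_sign_def by (simp add: comp_def split_def)
    also have "\<dots> = sgn G (es ! 0) * sgn G (es ! 0)" by (subst es2) simp
    finally have "sgn G (es ! 0) * sgn G (es ! 0) = -1" using neg by simp
    moreover have "sgn G (es ! 0) * sgn G (es ! 0) \<ge> 0" by simp
    ultimately show False by linarith
  qed
  then show ?thesis
    using len k1 dvs step unfolding circuit_def es_def[symmetric] vs_def[symmetric]
    by (auto simp: in_set_conv_nth)
qed

lemma closed_walk_split:
  assumes L: "walk G s L v v" and ij: "i < j" "j < length L" "fst (L ! i) = fst (L ! j)"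
  shows "\<exists>L1 L2 w u. L1 \<noteq> [] \<and> L2 \<noteq> [] \<and> length L1 < length L \<and> length L2 < length L \<and>
    walk G s L1 w w \<and> walk G s L2 u u \<and> walk_sign G L = walk_sign G L1 * walk_sign G L2"
proof -
  define A where "A = take i L"
  define B where "B = take (j - i) (drop i L)"
  define C where "C = drop j L"
  have LABC: "L = A @ B @ C" unfolding A_def B_def C_def using take_drop_split[of i j L] ij(1) by simp
  obtain m1 m2 where m: "walk G s A v m1" "walk G s B m1 m2" "walk G s C m2 v"
    using L LABC walk_append by metis
  have Bne: "B \<noteq> []" and Cne: "C \<noteq> []" unfolding B_def C_def using ij by simp_all
  have "m1 = fst (L ! i)" using walk_hd[OF m(2) Bne] ij unfolding B_def by (simp add: hd_conv_nth)
  moreover have "m2 = fst (L ! j)" using walk_hd[OF m(3) Cne] ij unfolding C_def by (simp add: hd_conv_nth)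
  ultimately have "m1 = m2" using ij(3) by simp
  then have "walk G s B m1 m1" "walk G s (A @ C) v v" using m walk_append by metis+
  moreover have "length B < length L" "length (A @ C) < length L"
    unfolding A_def B_def C_def using ij by simp_all
  moreover have "walk_sign G L = walk_sign G B * walk_sign G (A @ C)"
    unfolding LABC walk_sign_append by simp
  ultimately show ?thesis using Bne Cne by blast
qed

lemma neg_closed_walk_neg_circuit:
  assumes "L \<noteq> []" "walk G s L v v" "walk_sign G L = -1"
  shows "\<exists>es vs. circuit G s es vs \<and> prod_list (map (sgn G) es) = -1"
  using assms
proof (induction "length L" arbitrary: L v rule: less_induct)
  case less
  show ?case
  proof (cases "distinct (map fst L)")
    case True
    have "circuit G s (map (fst \<circ> snd) L) (map fst L)"
      by (rule closed_walk_distinct_circuit[OF less.prems(1,2) True less.prems(3)])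
    moreover have "prod_list (map (sgn G) (map (fst \<circ> snd) L)) = walk_sign G L"
      unfolding walk_sign_def by (simp add: comp_def split_def)
    ultimately show ?thesis using less.prems(3) by auto
  next
    case False
    then obtain i j where "i < length L" "j < length L" "i \<noteq> j" "fst (L ! i) = fst (L ! j)"
      by (auto simp: distinct_conv_nth)
    then obtain i j where ij: "i < j" "j < length L" "fst (L ! i) = fst (L ! j)"
      by (metis linorder_neqE_nat)
    obtain L1 L2 w u where L12: "L1 \<noteq> []" "L2 \<noteq> []" "length L1 < length L" "length L2 < length L"
      "walk G s L1 w w" "walk G s L2 u u" "walk_sign G L = walk_sign G L1 * walk_sign G L2"
      using closed_walk_split[OF less.prems(2) ij] by blast
    then have "walk_sign G L1 = -1 \<or> walk_sign G L2 = -1"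
      using less.prems(3) zmult_eq_neg1_iff by auto
    then show ?thesis
      using less.hyps[OF L12(3) L12(1) L12(5)] less.hyps[OF L12(4) L12(2) L12(6)] by blast
  qed
qed

lemma balanced_iff_no_neg_closed_walk: "balanced G s \<longleftrightarrow> \<not> neg_closed_walk G s"
proof
  assume b: "balanced G s"
  show "\<not> neg_closed_walk G s"
  proof
    assume "neg_closed_walk G s"
    then obtain L v where Lv: "L \<noteq> []" "walk G s L v v" "walk_sign G L = -1" unfolding neg_closed_walk_def by auto
    obtain es vs where "circuit G s es vs" "prod_list (map (sgn G) es) = -1"
      using neg_closed_walk_neg_circuit[OF Lv] by blast
    then show False using b unfolding balanced_def by blast
  qed
next
  assume "\<not> neg_closed_walk G s"
  then show "balanced G s" unfolding balanced_def using neg_circuit_neg_closed_walk by metis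
qed

section \<open>Contraction\<close>

text \<open>As \<open>e\<close> is positive, walks keep
  their sign when \<open>e\<close> is collapsed or re-inserted, so balance is preserved.\<close>

locale contraction_map =
  fixes G G' :: "('v, 'e::linorder) sgraph" and e :: 'e and a b :: 'v and r :: "'v \<Rightarrow> 'v"
  assumes ends_e: "ends G e = (a, b)" and sgn_e: "sgn G e = 1"
    and ends_contract: "\<And>f. ends G' f = map_prod r r (ends G f)" and sgn_contract: "sgn G' = sgn G"
    and r_def: "r = (\<lambda>x. if x = b then a else x)"
begin

lemma r_a: "r a = a" and r_b: "r b = a" using r_def by auto

lemma r_eq_cases: "r x = r y \<Longrightarrow> x \<noteq> y \<Longrightarrow> (x, y) = (a, b) \<or> (x, y) = (b, a)"
  using r_def by (auto split: if_splits)

lemma walk_project: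
  "walk G (insert e t) L u w \<Longrightarrow> \<exists>L'. walk G' t L' (r u) (r w) \<and> walk_sign G' L' = walk_sign G L"
proof (induction L arbitrary: u)
  case Nil then show ?case by (intro exI[of _ "[]"]) simp
next
  case (Cons st L)
  obtain x f y where st: "st = (x, f, y)" by (cases st)
  have h: "x = u" "f \<in> insert e t" "ends G f = (x, y) \<or> ends G f = (y, x)" "walk G (insert e t) L y w"
    using Cons.prems st by auto
  obtain L'' where L'': "walk G' t L'' (r y) (r w)" "walk_sign G' L'' = walk_sign G L" using Cons.IH[OF h(4)] by blast
  show ?case
  proof (cases "f = e")
    case True
    then have "r x = r y" using h(3) ends_e r_a r_b by auto
    then show ?thesis using L'' h(1) st True sgn_e by (intro exI[of _ L'']) simp
  next
    case False
    then have ft: "f \<in> t" using h(2) by simp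
    have "ends G' f = (r x, r y) \<or> ends G' f = (r y, r x)" using h(3) ends_contract[of f] by auto
    then have "walk G' t ((r x, f, r y) # L'') (r u) (r w)" using ft L''(1) h(1) by simp
    moreover have "walk_sign G' ((r x, f, r y) # L'') = walk_sign G ((x, f, y) # L)" using L''(2) sgn_contract by simp
    ultimately show ?thesis using st by blast
  qed
qed

definition join_walk :: "'v \<Rightarrow> 'v \<Rightarrow> ('v \<times> 'e \<times> 'v) list" where
  "join_walk p q = (if p = q then [] else [(p, e, q)])"

lemma walk_join_walk: "r p = r q \<Longrightarrow> walk G (insert e t) (join_walk p q) p q \<and> walk_sign G (join_walk p q) = 1"
  using r_eq_cases[of p q] ends_e sgn_e by (auto simp: join_walk_def)

lemma walk_lift:
  "walk G' t L x y \<Longrightarrow> r p = x \<Longrightarrow> r q = y \<Longrightarrow> \<exists>L'. walk G (insert e t) L' p q \<and> walk_sign G L' = walk_sign G' L"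
proof (induction L arbitrary: x p)
  case Nil
  then have "r p = r q" by simp
  then show ?case using walk_join_walk[of p q] by auto
next
  case (Cons st L)
  obtain x' f y' where st: "st = (x', f, y')" by (cases st)
  have h: "x' = x" "f \<in> t" "ends G' f = (x, y') \<or> ends G' f = (y', x)" "walk G' t L y' y"
    using Cons.prems st by auto
  obtain p1 q1 where pq: "ends G f = (p1, q1)" by (cases "ends G f")
  have e': "ends G' f = (r p1, r q1)" using ends_contract[of f] pq by simp
  have "\<exists>p2 q2. r p2 = x \<and> r q2 = y' \<and> (ends G f = (p2, q2) \<or> ends G f = (q2, p2))"
    using h(3) e' pq by auto
  then obtain p2 q2 where p2: "r p2 = x" "r q2 = y'" "ends G f = (p2, q2) \<or> ends G f = (q2, p2)" by blast
  obtain L'' where L'': "walk G (insert e t) L'' q2 q" "walk_sign G L'' = walk_sign G' L"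
    using Cons.IH[OF h(4) p2(2) Cons.prems(3)] by blast
  have fx: "walk G (insert e t) (join_walk p p2) p p2 \<and> walk_sign G (join_walk p p2) = 1"
    using walk_join_walk[of p p2] p2(1) Cons.prems(2) by simp
  define L' where "L' = join_walk p p2 @ [(p2, f, q2)] @ L''"
  have "walk G (insert e t) L' p q"
    unfolding L'_def walk_append using fx L''(1) p2(3) h(2) by auto
  moreover have "walk_sign G L' = walk_sign G' (st # L)"
    unfolding L'_def walk_sign_append using fx L''(2) st sgn_contract by simp
  ultimately show ?case by blast
qed

lemma balanced_contract: "balanced G (insert e t) \<longleftrightarrow> balanced G' t"
proof -
  have A: "neg_closed_walk G' t" if n: "neg_closed_walk G (insert e t)"
  proof -
    obtain L v where Lv: "L \<noteq> []" "walk G (insert e t) L v v" "walk_sign G L = -1" using n unfolding neg_closed_walk_def by auto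
    obtain L' where L': "walk G' t L' (r v) (r v)" "walk_sign G' L' = walk_sign G L" using walk_project[OF Lv(2)] by blast
    have "L' \<noteq> []" using L'(2) Lv(3) by auto
    then show ?thesis using L' Lv(3) unfolding neg_closed_walk_def by auto
  qed
  have B: "neg_closed_walk G (insert e t)" if n: "neg_closed_walk G' t"
  proof -
    obtain L v where Lv: "L \<noteq> []" "walk G' t L v v" "walk_sign G' L = -1" using n unfolding neg_closed_walk_def by auto
    obtain x f y L0 where L: "L = (x, f, y) # L0" using Lv(1) by (metis list.exhaust prod_cases3)
    have "x = v" "ends G' f = (x, y) \<or> ends G' f = (y, x)" using Lv(2) L by auto
    then have "\<exists>p. r p = v" using ends_contract[of f] by (cases "ends G f") auto
    then obtain p where p: "r p = v" by blast
    obtain L' where L': "walk G (insert e t) L' p p" "walk_sign G L' = walk_sign G' L" using walk_lift[OF Lv(2) p p] by blast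
    have "L' \<noteq> []" using L'(2) Lv(3) by auto
    then show ?thesis using L' Lv(3) unfolding neg_closed_walk_def by auto
  qed
  show ?thesis unfolding balanced_iff_no_neg_closed_walk using A B by blast
qed

end

locale contraction = contraction_map G G' e a b r
  for G G' :: "('v, 'e::linorder) sgraph" and e :: 'e and a b :: 'v and r :: "'v \<Rightarrow> 'v" +
  assumes wf: "wf_sgraph G" and e_edge: "e \<in> edges G" and edges_contract: "edges G' = edges G - {e}"
    and verts_contract: "verts G' = r ` verts G"
begin

lemma finite_verts: "finite (verts G)" and finite_edges: "finite (edges G)"
  using wf unfolding wf_sgraph_def by auto

lemma finite_verts_contract: "finite (verts G')" using finite_verts verts_contract by simp

lemma adj_project: "(x, y) \<in> adj G (insert e t) \<Longrightarrow> (r x, r y) \<in> (adj G' t)\<^sup>*"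
proof -
  assume "(x, y) \<in> adj G (insert e t)"
  then obtain f where f: "f \<in> insert e t" "ends G f = (x, y) \<or> ends G f = (y, x)" unfolding adj_def by blast
  show ?thesis
  proof (cases "f = e")
    case True
    then have "r x = r y" using f(2) ends_e r_a r_b by auto
    then show ?thesis by simp
  next
    case False
    then have "f \<in> t" using f(1) by simp
    moreover have "ends G' f = (r x, r y) \<or> ends G' f = (r y, r x)" using f(2) ends_contract[of f] by auto
    ultimately have "(r x, r y) \<in> adj G' t" unfolding adj_def by blast
    then show ?thesis by simp
  qed
qed

lemma rtrancl_project: "(x, y) \<in> (adj G (insert e t))\<^sup>* \<Longrightarrow> (r x, r y) \<in> (adj G' t)\<^sup>*"
proof (induction rule: rtrancl_induct)
  case base then show ?case by (rule rtrancl_refl)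
next
  case (step y z)
  show ?case by (rule rtrancl_trans[OF step.IH adj_project[OF step(2)]])
qed

lemma conn_contracted_vertex: "(p, r p) \<in> (adj G (insert e t))\<^sup>* \<and> (r p, p) \<in> (adj G (insert e t))\<^sup>*"
proof (cases "p = b")
  case True
  have "(b, a) \<in> adj G (insert e t)" "(a, b) \<in> adj G (insert e t)" using ends_e unfolding adj_def by blast+
  then show ?thesis using True r_b by auto
next
  case False then show ?thesis using r_def by simp
qed

lemma rtrancl_lift: "(x, y) \<in> (adj G' t)\<^sup>* \<Longrightarrow> r p = x \<Longrightarrow> r q = y \<Longrightarrow> (p, q) \<in> (adj G (insert e t))\<^sup>*"
proof (induction arbitrary: q rule: rtrancl_induct)
  case base
  then have "r p = r q" by simp
  then show ?case using conn_contracted_vertex[of p t] conn_contracted_vertex[of q t] rtrancl_trans by metis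
next
  case (step y z)
  obtain f where f: "f \<in> t" "ends G' f = (y, z) \<or> ends G' f = (z, y)" using step(2) unfolding adj_def by blast
  obtain p1 q1 where pq: "ends G f = (p1, q1)" by (cases "ends G f")
  have e': "ends G' f = (r p1, r q1)" using ends_contract[of f] pq by simp
  have "\<exists>p2 q2. r p2 = y \<and> r q2 = z \<and> (p2, q2) \<in> adj G (insert e t)"
  proof (cases "ends G' f = (y, z)")
    case True
    then have "r p1 = y" "r q1 = z" using e' by auto
    moreover have "(p1, q1) \<in> adj G (insert e t)" using pq f(1) unfolding adj_def by blast
    ultimately show ?thesis by blast
  next
    case False
    then have "r q1 = y" "r p1 = z" using e' f(2) by auto
    moreover have "(q1, p1) \<in> adj G (insert e t)" using pq f(1) unfolding adj_def by blast
    ultimately show ?thesis by blast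
  qed
  then obtain p2 q2 where p2: "r p2 = y" "r q2 = z" "(p2, q2) \<in> adj G (insert e t)" by blast
  have "(p, p2) \<in> (adj G (insert e t))\<^sup>*" using step.IH[OF step.prems(1) p2(1)] .
  moreover have "(q2, q) \<in> (adj G (insert e t))\<^sup>*"
    using conn_contracted_vertex[of q2 t] conn_contracted_vertex[of q t] p2(2) step.prems(2) rtrancl_trans by metis
  ultimately show ?case using p2(3) by (meson rtrancl_into_rtrancl rtrancl_trans)
qed

lemma conn_rel_contract_iff:
  assumes "p \<in> verts G" "q \<in> verts G"
  shows "(r p, r q) \<in> conn_rel G' t \<longleftrightarrow> (p, q) \<in> conn_rel G (insert e t)"
proof
  assume "(r p, r q) \<in> conn_rel G' t"
  then have "(r p, r q) \<in> (adj G' t)\<^sup>*" unfolding conn_rel_def by simp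
  then show "(p, q) \<in> conn_rel G (insert e t)" using rtrancl_lift assms unfolding conn_rel_def by blast
next
  assume "(p, q) \<in> conn_rel G (insert e t)"
  then have "(r p, r q) \<in> (adj G' t)\<^sup>*" using rtrancl_project unfolding conn_rel_def by blast
  then show "(r p, r q) \<in> conn_rel G' t" using assms verts_contract unfolding conn_rel_def by blast
qed

lemma conn_rel_if_same_image: "p \<in> verts G \<Longrightarrow> q \<in> verts G \<Longrightarrow> r p = r q \<Longrightarrow> (p, q) \<in> conn_rel G (insert e t)"
  using conn_rel_contract_iff conn_rel_equiv[of G' t] verts_contract
  by (metis equiv_class_eq_iff equiv_class_self image_eqI Image_singleton_iff)

lemma conn_class_contract: "p \<in> verts G \<Longrightarrow> conn_rel G' t `` {r p} = r ` (conn_rel G (insert e t) `` {p})"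
proof
  assume p: "p \<in> verts G"
  show "conn_rel G' t `` {r p} \<subseteq> r ` (conn_rel G (insert e t) `` {p})"
  proof
    fix y assume "y \<in> conn_rel G' t `` {r p}"
    then have y: "(r p, y) \<in> conn_rel G' t" by simp
    then have "y \<in> verts G'" unfolding conn_rel_def by simp
    then obtain q where q: "q \<in> verts G" "y = r q" using verts_contract by blast
    then have "(p, q) \<in> conn_rel G (insert e t)" using conn_rel_contract_iff[OF p q(1)] y by simp
    then show "y \<in> r ` (conn_rel G (insert e t) `` {p})" using q by blast
  qed
  show "r ` (conn_rel G (insert e t) `` {p}) \<subseteq> conn_rel G' t `` {r p}"
  proof
    fix y assume "y \<in> r ` (conn_rel G (insert e t) `` {p})"
    then obtain q where q: "(p, q) \<in> conn_rel G (insert e t)" "y = r q" by blast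
    then have "q \<in> verts G" unfolding conn_rel_def by simp
    then show "y \<in> conn_rel G' t `` {r p}" using conn_rel_contract_iff[OF p] q by simp
  qed
qed

lemma comps_contract: "comps G' t = (\<lambda>X. r ` X) ` comps G (insert e t)"
proof
  show "comps G' t \<subseteq> (\<lambda>X. r ` X) ` comps G (insert e t)"
  proof
    fix Y assume "Y \<in> comps G' t"
    then obtain y where y: "y \<in> verts G'" "Y = conn_rel G' t `` {y}" unfolding comps_def by (auto elim: quotientE)
    then obtain p where p: "p \<in> verts G" "y = r p" using verts_contract by blast
    have "Y = r ` (conn_rel G (insert e t) `` {p})" using y p conn_class_contract by simp
    moreover have "conn_rel G (insert e t) `` {p} \<in> comps G (insert e t)" by (rule class_in_comps[OF p(1)])
    ultimately show "Y \<in> (\<lambda>X. r ` X) ` comps G (insert e t)" by blast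
  qed
  show "(\<lambda>X. r ` X) ` comps G (insert e t) \<subseteq> comps G' t"
  proof
    fix Y assume "Y \<in> (\<lambda>X. r ` X) ` comps G (insert e t)"
    then obtain X where X: "X \<in> comps G (insert e t)" "Y = r ` X" by blast
    then obtain p where p: "p \<in> verts G" "X = conn_rel G (insert e t) `` {p}" unfolding comps_def by (auto elim: quotientE)
    have "Y = conn_rel G' t `` {r p}" using X p conn_class_contract by simp
    moreover have "r p \<in> verts G'" using verts_contract p by simp
    ultimately show "Y \<in> comps G' t" using class_in_comps by simp
  qed
qed

lemma image_subset_comps_iff:
  assumes st: "s \<subseteq> t" and X: "X \<in> comps G (insert e s)" and Z: "Z \<in> comps G (insert e t)"
  shows "r ` X \<subseteq> r ` Z \<longleftrightarrow> X \<subseteq> Z"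
proof
  assume sub: "r ` X \<subseteq> r ` Z"
  obtain x where x: "x \<in> X" using comps_nonempty[OF X] by blast
  then obtain z where z: "z \<in> Z" "r x = r z" using sub by blast
  have xv: "x \<in> verts G" using comps_subset_verts[OF X] x by blast
  have zv: "z \<in> verts G" using comps_subset_verts[OF Z] z by blast
  have "(z, x) \<in> conn_rel G (insert e t)" using conn_rel_if_same_image[OF zv xv] z(2) by simp
  then have "x \<in> Z" using comps_eq_class[OF Z z(1)] by blast
  then have "X \<inter> Z \<noteq> {}" using x by blast
  then show "X \<subseteq> Z" using comps_overlap_subset[OF _ X Z] st by blast
qed blast

lemma inj_on_image_comps: "inj_on (\<lambda>X. r ` X) (comps G (insert e t))"
proof (rule inj_onI)
  fix X Y assume X: "X \<in> comps G (insert e t)" and Y: "Y \<in> comps G (insert e t)" and eq: "r ` X = r ` Y"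
  have "X \<subseteq> Y" using image_subset_comps_iff[OF subset_refl X Y] eq by simp
  then show "X = Y" using comps_disjoint[OF X Y] comps_nonempty[OF X] by blast
qed

definition lift_label :: "'e set \<Rightarrow> ('v set \<Rightarrow> bool) \<Rightarrow> 'v set \<Rightarrow> bool" where
  "lift_label t c = (\<lambda>X. X \<in> comps G (insert e t) \<and> c (r ` X))"

lemma image_comps_contract: "X \<in> comps G (insert e t) \<Longrightarrow> r ` X \<in> comps G' t"
  using comps_contract by blast

lemma comps_contract_obtain: "Y \<in> comps G' t \<Longrightarrow> \<exists>X\<in>comps G (insert e t). Y = r ` X"
  using comps_contract by blast

lemma merge_label_lift_label:
  assumes st: "s \<subseteq> t"
  shows "merge_label G (insert e s) (lift_label s c) (insert e t) = lift_label t (merge_label G' s c t)"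
proof (rule ext)
  fix Z
  have st': "insert e s \<subseteq> insert e t" using st by blast
  show "merge_label G (insert e s) (lift_label s c) (insert e t) Z = lift_label t (merge_label G' s c t) Z"
  proof (cases "Z \<in> comps G (insert e t)")
    case False then show ?thesis unfolding merge_label_def lift_label_def by blast
  next
    case True
    have "merge_label G' s c t (r ` Z) \<longleftrightarrow> (\<exists>X'\<in>comps G' s. X' \<subseteq> r ` Z \<and> c X')"
      unfolding merge_label_def using image_comps_contract[OF True] by simp
    also have "\<dots> \<longleftrightarrow> (\<exists>X\<in>comps G (insert e s). r ` X \<subseteq> r ` Z \<and> c (r ` X))"
      unfolding comps_contract[of s] by simp
    also have "\<dots> \<longleftrightarrow> (\<exists>X\<in>comps G (insert e s). X \<subseteq> Z \<and> c (r ` X))"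
      using image_subset_comps_iff[OF st _ True] by blast
    finally have "merge_label G' s c t (r ` Z) \<longleftrightarrow> (\<exists>X\<in>comps G (insert e s). X \<subseteq> Z \<and> c (r ` X))" .
    then show ?thesis using True unfolding merge_label_def lift_label_def by blast
  qed
qed

lemma merge_vanishes_lift_label:
  assumes st: "s \<subseteq> t"
  shows "merge_vanishes G (insert e s) (lift_label s c) (insert e t) \<longleftrightarrow> merge_vanishes G' s c t"
proof
  assume "merge_vanishes G (insert e s) (lift_label s c) (insert e t)"
  then obtain Z X1 X2 where h: "Z \<in> comps G (insert e t)" "X1 \<in> comps G (insert e s)" "X2 \<in> comps G (insert e s)"
    "X1 \<noteq> X2" "X1 \<subseteq> Z" "X2 \<subseteq> Z" "lift_label s c X1" "lift_label s c X2" using merge_vanishesE[OF finite_verts] by metis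
  have "r ` X1 \<noteq> r ` X2" using inj_on_image_comps[of s] h(2,3,4) unfolding inj_on_def by blast
  moreover have "r ` X1 \<subseteq> r ` Z" "r ` X2 \<subseteq> r ` Z" using h(5,6) by blast+
  moreover have "c (r ` X1)" "c (r ` X2)" using h(7,8) by (simp_all add: lift_label_def)
  ultimately show "merge_vanishes G' s c t"
    by (intro merge_vanishesI[OF finite_verts_contract image_comps_contract[OF h(1)] image_comps_contract[OF h(2)] image_comps_contract[OF h(3)]])
next
  assume "merge_vanishes G' s c t"
  then obtain Z' X1' X2' where h: "Z' \<in> comps G' t" "X1' \<in> comps G' s" "X2' \<in> comps G' s"
    "X1' \<noteq> X2'" "X1' \<subseteq> Z'" "X2' \<subseteq> Z'" "c X1'" "c X2'" using merge_vanishesE[OF finite_verts_contract] by metis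
  obtain Z where Z: "Z \<in> comps G (insert e t)" "Z' = r ` Z" using comps_contract_obtain[OF h(1)] by blast
  obtain X1 where X1: "X1 \<in> comps G (insert e s)" "X1' = r ` X1" using comps_contract_obtain[OF h(2)] by blast
  obtain X2 where X2: "X2 \<in> comps G (insert e s)" "X2' = r ` X2" using comps_contract_obtain[OF h(3)] by blast
  have "X1 \<noteq> X2" using h(4) X1 X2 by blast
  moreover have "X1 \<subseteq> Z" using image_subset_comps_iff[OF st X1(1) Z(1)] h(5) X1 Z by simp
  moreover have "X2 \<subseteq> Z" using image_subset_comps_iff[OF st X2(1) Z(1)] h(6) X2 Z by simp
  moreover have "lift_label s c X1" "lift_label s c X2" using X1 X2 h(7,8) by (simp_all add: lift_label_def)
  ultimately show "merge_vanishes G (insert e s) (lift_label s c) (insert e t)"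
    by (intro merge_vanishesI[OF finite_verts Z(1) X1(1) X2(1)])
qed

lemma card_lift_label: "card {X \<in> comps G (insert e t). lift_label t c X} = card {Y \<in> comps G' t. c Y}"
proof -
  have eq: "{Y \<in> comps G' t. c Y} = (\<lambda>X. r ` X) ` {X \<in> comps G (insert e t). lift_label t c X}"
  proof
    show "{Y \<in> comps G' t. c Y} \<subseteq> (\<lambda>X. r ` X) ` {X \<in> comps G (insert e t). lift_label t c X}"
    proof
      fix Y assume "Y \<in> {Y \<in> comps G' t. c Y}"
      then obtain X where "X \<in> comps G (insert e t)" "Y = r ` X" "c Y" using comps_contract_obtain by blast
      then show "Y \<in> (\<lambda>X. r ` X) ` {X \<in> comps G (insert e t). lift_label t c X}" by (auto simp: lift_label_def)
    qed
    show "(\<lambda>X. r ` X) ` {X \<in> comps G (insert e t). lift_label t c X} \<subseteq> {Y \<in> comps G' t. c Y}"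
      using image_comps_contract by (auto simp: lift_label_def)
  qed
  have "inj_on (\<lambda>X. r ` X) {X \<in> comps G (insert e t). lift_label t c X}"
    using inj_on_image_comps[of t] by (rule inj_on_subset) blast
  then show ?thesis unfolding eq by (simp add: card_image)
qed

lemma lift_label_inj:
  assumes "\<forall>X. X \<notin> comps G' t \<longrightarrow> \<not> c X" "\<forall>X. X \<notin> comps G' t \<longrightarrow> \<not> c' X" "lift_label t c = lift_label t c'"
  shows "c = c'"
proof (rule ext)
  fix Y
  show "c Y = c' Y"
  proof (cases "Y \<in> comps G' t")
    case False then show ?thesis using assms(1,2) by blast
  next
    case True
    then obtain X where X: "X \<in> comps G (insert e t)" "Y = r ` X" using comps_contract_obtain by blast
    have "lift_label t c X = lift_label t c' X" using assms(3) by simp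
    then show ?thesis using X by (simp add: lift_label_def)
  qed
qed

definition lift_state :: "('v, 'e) estate \<Rightarrow> ('v, 'e) estate" where
  "lift_state U = (insert e (fst U), lift_label (fst U) (snd U))"

lemma lift_state_bstates:
  assumes U: "U \<in> bstates G' n j"
  shows "lift_state U \<in> bstates G (Suc n) j \<and> e \<in> fst (lift_state U)"
proof -
  obtain t c where Ud: "U = (t, c)" by (cases U)
  have t: "t \<subseteq> edges G - {e}" "card t = n" "balanced G' t" "\<forall>X. X \<notin> comps G' t \<longrightarrow> \<not> c X"
    "xdeg G' (t, c) = j" using U unfolding Ud bstates_def edges_contract by auto
  have ft: "finite t" using t(1) finite_edges finite_subset by blast
  have "insert e t \<subseteq> edges G" using t(1) e_edge by blast
  moreover have "e \<notin> t" using t(1) by blast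
  then have "card (insert e t) = Suc n" using t(2) ft by simp
  moreover have "balanced G (insert e t)" using t(3) balanced_contract by simp
  moreover have "\<forall>X. X \<notin> comps G (insert e t) \<longrightarrow> \<not> lift_label t c X" by (simp add: lift_label_def)
  moreover have "xdeg G (insert e t, lift_label t c) = j" using card_lift_label t(5) by (simp add: xdeg_def)
  ultimately show ?thesis unfolding lift_state_def Ud bstates_def by simp
qed

lemma lift_state_inj:
  assumes U: "U \<in> bstates G' n j" and U': "U' \<in> bstates G' n' j'" and eq: "lift_state U = lift_state U'"
  shows "U = U'"
proof -
  obtain t c where Ud: "U = (t, c)" by (cases U)
  obtain t' c' where Ud': "U' = (t', c')" by (cases U')
  have t: "t \<subseteq> edges G - {e}" "\<forall>X. X \<notin> comps G' t \<longrightarrow> \<not> c X" using U unfolding Ud bstates_def edges_contract by auto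
  have t': "t' \<subseteq> edges G - {e}" "\<forall>X. X \<notin> comps G' t' \<longrightarrow> \<not> c' X" using U' unfolding Ud' bstates_def edges_contract by auto
  have "insert e t = insert e t'" using eq unfolding lift_state_def Ud Ud' by simp
  then have tt: "t = t'" using t(1) t'(1) insert_ident by blast
  have "lift_label t c = lift_label t c'" using eq unfolding lift_state_def Ud Ud' tt by simp
  then have "c = c'" using lift_label_inj t(2) t'(2) tt by blast
  then show ?thesis using Ud Ud' tt by simp
qed

lemma lift_state_surj:
  assumes T: "T \<in> bstates G (Suc n) j" and eT: "e \<in> fst T"
  shows "\<exists>U\<in>bstates G' n j. lift_state U = T"
proof -
  obtain t' c' where Td: "T = (t', c')" by (cases T)
  have h: "t' \<subseteq> edges G" "card t' = Suc n" "balanced G t'" "\<forall>X. X \<notin> comps G t' \<longrightarrow> \<not> c' X"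
    "xdeg G (t', c') = j" using T unfolding Td bstates_def by auto
  have et: "e \<in> t'" using eT Td by simp
  define t where "t = t' - {e}"
  have it: "insert e t = t'" using et unfolding t_def by blast
  define c where "c = (\<lambda>Y. Y \<in> comps G' t \<and> (\<exists>X\<in>comps G t'. r ` X = Y \<and> c' X))"
  have cc: "lift_label t c = c'"
  proof (rule ext)
    fix X
    show "lift_label t c X = c' X"
    proof (cases "X \<in> comps G t'")
      case False then show ?thesis using h(4) it by (simp add: lift_label_def)
    next
      case True
      have "r ` X \<in> comps G' t" using image_comps_contract[of X t] True it by simp
      moreover have "(\<exists>X2\<in>comps G t'. r ` X2 = r ` X \<and> c' X2) \<longleftrightarrow> c' X"
        using inj_on_image_comps[of t] True it unfolding inj_on_def by metis
      ultimately show ?thesis using True it by (simp add: lift_label_def c_def)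
    qed
  qed
  have ft': "finite t'" using h(1) finite_edges finite_subset by blast
  have "t \<subseteq> edges G'" using h(1) unfolding t_def edges_contract by blast
  moreover have "card t = n" using h(2) et ft' unfolding t_def by simp
  moreover have "balanced G' t" using balanced_contract[of t] h(3) it by simp
  moreover have "\<forall>X. X \<notin> comps G' t \<longrightarrow> \<not> c X" unfolding c_def by blast
  moreover have "xdeg G' (t, c) = j"
    using card_lift_label[of t c] h(5) cc it by (simp add: xdeg_def)
  ultimately have "(t, c) \<in> bstates G' n j" unfolding bstates_def by simp
  moreover have "lift_state (t, c) = T" unfolding lift_state_def Td using it cc by simp
  ultimately show ?thesis by blast
qed

definition sign_above :: "'e set \<Rightarrow> int" where
  "sign_above t = ((-1::int) ^ card {f \<in> t. e < f})"

lemma sign_above_insert: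
  assumes "finite s" "e' \<notin> s" "e' \<noteq> e"
  shows "sign_above (insert e' s) = (if e < e' then - sign_above s else sign_above s)"
proof (cases "e < e'")
  case True
  have "{f \<in> insert e' s. e < f} = insert e' {f \<in> s. e < f}" using True by auto
  moreover have "card (insert e' {f \<in> s. e < f}) = Suc (card {f \<in> s. e < f})" using assms by simp
  ultimately show ?thesis using True by (simp add: sign_above_def)
next
  case False
  have "{f \<in> insert e' s. e < f} = {f \<in> s. e < f}" using False by auto
  then show ?thesis using False by (simp add: sign_above_def)
qed

lemma lift_state_eq_merge_step:
  assumes e: "e \<notin> t" "e \<notin> s" "e' \<noteq> e" and c2: "\<forall>X. X \<notin> comps G' t \<longrightarrow> \<not> c2 X"
  shows "lift_state (t, c2) = (insert e' (insert e s), merge_label G (insert e s) (lift_label s c) (insert e' (insert e s)))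
     \<longleftrightarrow> (t, c2) = (insert e' s, merge_label G' s c (insert e' s))"
proof -
  have label: "merge_label G (insert e s) (lift_label s c) (insert e' (insert e s))
      = lift_label (insert e' s) (merge_label G' s c (insert e' s))"
    using merge_label_lift_label[of s "insert e' s" c] by (simp add: insert_commute subset_insertI)
  have edges: "insert e t = insert e' (insert e s) \<longleftrightarrow> t = insert e' s"
    using insert_ident[of e t "insert e' s"] e by (simp add: insert_commute)
  have "c2 = merge_label G' s c t" if "lift_label t c2 = lift_label t (merge_label G' s c t)"
    using lift_label_inj[OF c2 _ that] unfolding merge_label_def by blast
  then show ?thesis unfolding lift_state_def fst_conv snd_conv label using edges by auto
qed

text \<open>The factor \<^const>\<open>sign_above\<close> corrects for the position of \<open>e\<close> in the edge order.\<close>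

lemma dcoef_lift_state:
  assumes U: "U \<in> bstates G' n j" and V: "V \<in> bstates G' (Suc n) j"
  shows "sign_above (fst U) * dcoef G (lift_state U) (lift_state V) = sign_above (fst V) * dcoef G' U V"
proof -
  obtain s c where Ud: "U = (s, c)" by (cases U)
  obtain t c2 where Vd: "V = (t, c2)" by (cases V)
  have s: "s \<subseteq> edges G - {e}" using U unfolding Ud bstates_def edges_contract by auto
  have t: "t \<subseteq> edges G - {e}" "\<forall>X. X \<notin> comps G' t \<longrightarrow> \<not> c2 X"
    using V unfolding Vd bstates_def edges_contract by auto
  have fs: "finite s" using s finite_edges finite_subset by blast
  define C1 where "C1 e' \<longleftrightarrow> balanced G (insert e t) \<and>
      \<not> merge_vanishes G (insert e s) (lift_label s c) (insert e' (insert e s)) \<and>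
      lift_state V = (insert e' (insert e s), merge_label G (insert e s) (lift_label s c) (insert e' (insert e s)))" for e'
  define C2 where "C2 e' \<longleftrightarrow> balanced G' t \<and> \<not> merge_vanishes G' s c (insert e' s) \<and>
      V = (insert e' s, merge_label G' s c (insert e' s))" for e'
  have L: "dcoef G (lift_state U) (lift_state V) = (\<Sum>e'\<in>edges G - insert e s. if C1 e' then edge_sign (insert e s) e' else 0)"
    unfolding dcoef_eq C1_def lift_state_def Ud Vd fst_conv snd_conv ..
  have E: "edges G' - s = edges G - insert e s" using edges_contract by blast
  have R: "dcoef G' U V = (\<Sum>e'\<in>edges G - insert e s. if C2 e' then edge_sign s e' else 0)"
    unfolding dcoef_eq C2_def Ud Vd fst_conv snd_conv E ..
  have "sign_above s * (if C1 e' then edge_sign (insert e s) e' else 0) = sign_above t * (if C2 e' then edge_sign s e' else 0)"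
    if e': "e' \<in> edges G - insert e s" for e'
  proof -
    have "C1 e' = C2 e'"
      using balanced_contract[of t] merge_vanishes_lift_label[of s "insert e' s" c]
        lift_state_eq_merge_step[of t s e' c2 c] t s e'
      unfolding C1_def C2_def Vd by (auto simp: insert_commute)
    moreover have "sign_above t = (if e < e' then - sign_above s else sign_above s)" if "C2 e'"
      using that sign_above_insert[OF fs, of e'] e' unfolding C2_def Vd by auto
    moreover have "e \<notin> s" using s by blast
    ultimately show ?thesis using edge_sign_insert[OF fs, of e e'] by auto
  qed
  then have "sign_above s * dcoef G (lift_state U) (lift_state V) = sign_above t * dcoef G' U V"
    unfolding L R sum_distrib_left by (rule sum.cong[OF refl])
  then show ?thesis using Ud Vd by simp
qed

end

section \<open>Deletion and contraction on cochains\<close>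

lemma comps_delete: "comps (delete_edge G e) s = comps G s"
  by (simp add: comps_def conn_rel_def adj_def delete_edge_def)

lemma balanced_delete: "balanced (delete_edge G e) s = balanced G s"
  by (simp add: balanced_def circuit_def delete_edge_def)

lemma edges_delete: "edges (delete_edge G e) = edges G - {e}"
  by (simp add: delete_edge_def)

lemma bstates_delete: "bstates (delete_edge G e) n j = {T \<in> bstates G n j. e \<notin> fst T}"
  unfolding bstates_def xdeg_def comps_delete balanced_delete edges_delete by auto

lemma merge_label_delete: "merge_label (delete_edge G e) = merge_label G"
  by (simp add: merge_label_def comps_delete fun_eq_iff)

lemma merge_vanishes_delete: "merge_vanishes (delete_edge G e) = merge_vanishes G"
  by (simp add: merge_vanishes_def comps_delete fun_eq_iff)

lemma dcoef_delete:
  assumes "e \<notin> fst T" and fE: "finite (edges G)"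
  shows "dcoef (delete_edge G e) S T = dcoef G S T"
proof -
  have E: "edges (delete_edge G e) - fst S \<subseteq> edges G - fst S" by (auto simp: delete_edge_def)
  show ?thesis
    unfolding dcoef_eq merge_label_delete merge_vanishes_delete balanced_delete
  proof (rule sum.mono_neutral_left)
    show "finite (edges G - fst S)" using fE by simp
    show "edges (delete_edge G e) - fst S \<subseteq> edges G - fst S" by (rule E)
  qed (use assms(1) in \<open>auto simp: delete_edge_def\<close>)
qed

lemma dcoef_subset: "dcoef G S T \<noteq> 0 \<Longrightarrow> fst S \<subseteq> fst T"
proof -
  assume "dcoef G S T \<noteq> 0"
  from sum.not_neutral_contains_not_neutral[OF this[unfolded dcoef_eq]] obtain e' where "(if balanced G (fst T) \<and> \<not> merge_vanishes G (fst S) (snd S) (insert e' (fst S)) \<and>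
            T = (insert e' (fst S), merge_label G (fst S) (snd S) (insert e' (fst S))) then edge_sign (fst S) e' else 0) \<noteq> 0"
    by blast
  then have "T = (insert e' (fst S), merge_label G (fst S) (snd S) (insert e' (fst S)))" by (auto split: if_splits)
  then show ?thesis by auto
qed

context contraction
begin

lemma wf_contracted: "wf_sgraph G'"
proof -
  have "fst (ends G' f) \<in> verts G' \<and> snd (ends G' f) \<in> verts G' \<and> sgn G' f \<in> {1, -1}" if f: "f \<in> edges G'" for f
  proof -
    have fG: "f \<in> edges G" using f edges_contract by blast
    then have "fst (ends G f) \<in> verts G" "snd (ends G f) \<in> verts G" "sgn G f \<in> {1, -1}"
      using wf unfolding wf_sgraph_def by auto
    then show ?thesis using ends_contract[of f] sgn_contract verts_contract by (cases "ends G f") auto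
  qed
  moreover have "finite (edges G')" using finite_edges edges_contract by simp
  ultimately show ?thesis using finite_verts_contract unfolding wf_sgraph_def by blast
qed

lemma sign_above_square: "sign_above t * sign_above t = 1"
  unfolding sign_above_def by (simp add: power_mult_distrib[symmetric])

definition incl_cochain :: "nat \<Rightarrow> nat \<Rightarrow> (('v, 'e) estate \<Rightarrow> int) \<Rightarrow> ('v, 'e) estate \<Rightarrow> int" where
  "incl_cochain j n f = (\<lambda>T. \<Sum>U\<in>bstates G' n j. if lift_state U = T then sign_above (fst U) * f U else 0)"

definition restrict_cochain :: "nat \<Rightarrow> (('v, 'e) estate \<Rightarrow> int) \<Rightarrow> ('v, 'e) estate \<Rightarrow> int" where
  "restrict_cochain n g = (\<lambda>T. if e \<in> fst T then 0 else g T)"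

lemma incl_cochain_lift_state: "U \<in> bstates G' n j \<Longrightarrow> incl_cochain j n f (lift_state U) = sign_above (fst U) * f U"
proof -
  assume U: "U \<in> bstates G' n j"
  have "incl_cochain j n f (lift_state U) = (\<Sum>U'\<in>bstates G' n j. if U' = U then sign_above (fst U') * f U' else 0)"
    unfolding incl_cochain_def using lift_state_inj[OF _ U] by (intro sum.cong) auto
  also have "\<dots> = sign_above (fst U) * f U" using U bstates_finite[OF wf_contracted] by simp
  finally show ?thesis .
qed

lemma incl_cochain_not_lifted: "\<forall>U\<in>bstates G' n j. lift_state U \<noteq> T \<Longrightarrow> incl_cochain j n f T = 0"
  unfolding incl_cochain_def by (intro sum.neutral) auto

lemma incl_cochain_additive: "additive_map (bstates G' n j) (bstates G (Suc n) j) (incl_cochain j n)"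
  unfolding additive_map_def
proof (intro conjI ballI)
  fix x assume "x \<in> supported (bstates G' n j)"
  have "incl_cochain j n x T = 0" if T: "T \<notin> bstates G (Suc n) j" for T
  proof -
    have "\<forall>U\<in>bstates G' n j. lift_state U \<noteq> T" using lift_state_bstates T by blast
    then show ?thesis by (rule incl_cochain_not_lifted)
  qed
  then show "incl_cochain j n x \<in> supported (bstates G (Suc n) j)" unfolding supported_def by blast
next
  fix x y assume "x \<in> supported (bstates G' n j)" "y \<in> supported (bstates G' n j)"
  show "incl_cochain j n (x + y) = incl_cochain j n x + incl_cochain j n y"
  proof (rule ext)
    fix T
    have "incl_cochain j n (x + y) T = (\<Sum>U\<in>bstates G' n j. (if lift_state U = T then sign_above (fst U) * x U else 0) + (if lift_state U = T then sign_above (fst U) * y U else 0))"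
      unfolding incl_cochain_def by (intro sum.cong) (auto simp: distrib_left)
    also have "\<dots> = incl_cochain j n x T + incl_cochain j n y T" unfolding incl_cochain_def by (rule sum.distrib)
    finally show "incl_cochain j n (x + y) T = (incl_cochain j n x + incl_cochain j n y) T" by simp
  qed
qed

lemma incl_cochain_kernel: "x \<in> supported (bstates G' n j) \<Longrightarrow> incl_cochain j n x = 0 \<Longrightarrow> x = 0"
proof (rule ext)
  fix U assume x: "x \<in> supported (bstates G' n j)" and a: "incl_cochain j n x = 0"
  show "x U = 0 U"
  proof (cases "U \<in> bstates G' n j")
    case True
    have "sign_above (fst U) * x U = 0" using incl_cochain_lift_state[OF True, of x] a by simp
    moreover have "sign_above (fst U) \<noteq> 0" using sign_above_square[of "fst U"] by auto
    ultimately show ?thesis by simp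
  next
    case False
    then have "x U = 0" using x unfolding supported_def by blast
    then show ?thesis by simp
  qed
qed

lemma restrict_cochain_additive: "additive_map (bstates G n j) (bstates (delete_edge G e) n j) (restrict_cochain n)"
  unfolding additive_map_def
proof (intro conjI ballI)
  fix x assume x: "x \<in> supported (bstates G n j)"
  show "restrict_cochain n x \<in> supported (bstates (delete_edge G e) n j)"
    using x unfolding supported_def restrict_cochain_def bstates_delete by auto
next
  fix x y show "restrict_cochain n (x + y) = restrict_cochain n x + restrict_cochain n y" unfolding restrict_cochain_def by (rule ext) simp
qed

lemma restrict_cochain_surj: "c \<in> supported (bstates (delete_edge G e) n j) \<Longrightarrow> \<exists>b\<in>supported (bstates G n j). restrict_cochain n b = c"
proof -
  assume c: "c \<in> supported (bstates (delete_edge G e) n j)"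
  have "c \<in> supported (bstates G n j)" using c unfolding supported_def bstates_delete by auto
  moreover have "restrict_cochain n c = c" using c unfolding supported_def restrict_cochain_def bstates_delete by (auto simp: fun_eq_iff)
  ultimately show ?thesis by blast
qed

lemma restrict_cochain_exact:
  assumes y: "y \<in> supported (bstates G (Suc n) j)" and p: "restrict_cochain (Suc n) y = 0"
  shows "\<exists>x\<in>supported (bstates G' n j). incl_cochain j n x = y"
proof -
  define x where "x U = (if U \<in> bstates G' n j then sign_above (fst U) * y (lift_state U) else 0)" for U
  have ac: "x \<in> supported (bstates G' n j)" unfolding supported_def x_def by simp
  have "incl_cochain j n x = y"
  proof (rule ext)
    fix T
    show "incl_cochain j n x T = y T"
    proof (cases "\<exists>U\<in>bstates G' n j. lift_state U = T")
      case True
      then obtain U where U: "U \<in> bstates G' n j" "lift_state U = T" by blast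
      have "incl_cochain j n x T = sign_above (fst U) * (sign_above (fst U) * y T)" using incl_cochain_lift_state[OF U(1)] U by (simp add: x_def)
      also have "\<dots> = y T" using sign_above_square[of "fst U"] by (simp add: mult.assoc[symmetric])
      finally show ?thesis .
    next
      case False
      then have "incl_cochain j n x T = 0" using incl_cochain_not_lifted by blast
      moreover have "y T = 0"
      proof (cases "e \<in> fst T")
        case False
        then show ?thesis using fun_cong[OF p, of T] unfolding restrict_cochain_def by simp
      next
        case True
        then have "T \<notin> bstates G (Suc n) j" using lift_state_surj \<open>\<not> (\<exists>U\<in>bstates G' n j. lift_state U = T)\<close> by blast
        then show ?thesis using y unfolding supported_def by blast
      qed
      ultimately show ?thesis by simp
    qed
  qed
  then show ?thesis using ac by blast
qed

lemma restrict_incl_cochain: "restrict_cochain (Suc n) (incl_cochain j n x) = 0"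
proof (rule ext)
  fix T
  show "restrict_cochain (Suc n) (incl_cochain j n x) T = 0 T"
  proof (cases "e \<in> fst T")
    case True then show ?thesis by (simp add: restrict_cochain_def)
  next
    case False
    then have "\<forall>U\<in>bstates G' n j. lift_state U \<noteq> T" using lift_state_bstates by blast
    then show ?thesis using incl_cochain_not_lifted False by (simp add: restrict_cochain_def)
  qed
qed

lemma restrict_cochain_0_kernel: "y \<in> supported (bstates G 0 j) \<Longrightarrow> restrict_cochain 0 y = 0 \<Longrightarrow> y = 0"
proof (rule ext)
  fix T assume y: "y \<in> supported (bstates G 0 j)" and p: "restrict_cochain 0 y = 0"
  show "y T = 0 T"
  proof (cases "T \<in> bstates G 0 j")
    case True
    then have "fst T \<subseteq> edges G" "card (fst T) = 0" unfolding bstates_def by auto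
    then have "fst T = {}" using finite_edges finite_subset by fastforce
    then show ?thesis using fun_cong[OF p, of T] unfolding restrict_cochain_def by simp
  next
    case False then have "y T = 0" using y unfolding supported_def by blast then show ?thesis by simp
  qed
qed

lemma restrict_cochain_chain:
  assumes y: "y \<in> supported (bstates G n j)"
  shows "restrict_cochain (Suc n) (dmap G n j y) = dmap (delete_edge G e) n j (restrict_cochain n y)"
proof (rule ext)
  fix T
  show "restrict_cochain (Suc n) (dmap G n j y) T = dmap (delete_edge G e) n j (restrict_cochain n y) T"
  proof (cases "e \<in> fst T")
    case True
    then show ?thesis unfolding restrict_cochain_def dmap_def bstates_delete by simp
  next
    case False
    show ?thesis
    proof (cases "T \<in> bstates G (Suc n) j")
      case Tn: False
      then show ?thesis using False unfolding restrict_cochain_def dmap_def bstates_delete by simp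
    next
      case Tn: True
      have "(\<Sum>S\<in>bstates (delete_edge G e) n j. restrict_cochain n y S * dcoef (delete_edge G e) S T)
          = (\<Sum>S\<in>bstates (delete_edge G e) n j. y S * dcoef G S T)"
        unfolding bstates_delete restrict_cochain_def using dcoef_delete[OF False finite_edges] by (intro sum.cong) auto
      also have "\<dots> = (\<Sum>S\<in>bstates G n j. y S * dcoef G S T)"
      proof (rule sum.mono_neutral_left)
        show "finite (bstates G n j)" by (rule bstates_finite[OF wf])
        show "bstates (delete_edge G e) n j \<subseteq> bstates G n j" unfolding bstates_delete by blast
        show "\<forall>S\<in>bstates G n j - bstates (delete_edge G e) n j. y S * dcoef G S T = 0"
        proof
          fix S assume "S \<in> bstates G n j - bstates (delete_edge G e) n j"
          then have "e \<in> fst S" unfolding bstates_delete by blast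
          then have "dcoef G S T = 0" using dcoef_subset False by blast
          then show "y S * dcoef G S T = 0" by simp
        qed
      qed
      finally show ?thesis using False Tn unfolding restrict_cochain_def dmap_def bstates_delete by simp
    qed
  qed
qed

lemma sum_incl_cochain:
  "(\<Sum>S\<in>bstates G (Suc n) j. incl_cochain j n f S * h S)
     = (\<Sum>U\<in>bstates G' n j. sign_above (fst U) * f U * h (lift_state U))"
proof -
  have "(\<Sum>S\<in>bstates G (Suc n) j. incl_cochain j n f S * h S)
      = (\<Sum>U\<in>bstates G' n j. \<Sum>S\<in>bstates G (Suc n) j.
           if lift_state U = S then sign_above (fst U) * f U * h S else 0)"
    unfolding incl_cochain_def sum_distrib_right by (subst sum.swap) (intro sum.cong; auto)
  also have "\<dots> = (\<Sum>U\<in>bstates G' n j. sign_above (fst U) * f U * h (lift_state U))"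
    using lift_state_bstates bstates_finite[OF wf] by (intro sum.cong refl) (simp add: sum.delta')
  finally show ?thesis .
qed

lemma incl_cochain_chain:
  assumes x: "x \<in> supported (bstates G' n j)"
  shows "dmap G (Suc n) j (incl_cochain j n x) = incl_cochain j (Suc n) (dmap G' n j x)"
proof (rule ext)
  fix T
  have LHS: "(\<Sum>S\<in>bstates G (Suc n) j. incl_cochain j n x S * dcoef G S T)
      = (\<Sum>U\<in>bstates G' n j. sign_above (fst U) * x U * dcoef G (lift_state U) T)"
    by (rule sum_incl_cochain)
  show "dmap G (Suc n) j (incl_cochain j n x) T = incl_cochain j (Suc n) (dmap G' n j x) T"
  proof (cases "\<exists>V\<in>bstates G' (Suc n) j. lift_state V = T")
    case True
    then obtain V where V: "V \<in> bstates G' (Suc n) j" "lift_state V = T" by blast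
    have TB: "T \<in> bstates G (Suc (Suc n)) j" using lift_state_bstates[OF V(1)] V(2) by blast
    have "incl_cochain j (Suc n) (dmap G' n j x) T = sign_above (fst V) * dmap G' n j x V" using incl_cochain_lift_state[OF V(1)] V(2) by simp
    also have "\<dots> = sign_above (fst V) * (\<Sum>U\<in>bstates G' n j. x U * dcoef G' U V)" using V(1) by (simp add: dmap_def)
    also have "\<dots> = (\<Sum>U\<in>bstates G' n j. x U * (sign_above (fst V) * dcoef G' U V))"
      by (simp add: sum_distrib_left mult.left_commute)
    also have "\<dots> = (\<Sum>U\<in>bstates G' n j. x U * (sign_above (fst U) * dcoef G (lift_state U) (lift_state V)))"
      using dcoef_lift_state[OF _ V(1)] by (intro sum.cong) auto
    also have "\<dots> = (\<Sum>S\<in>bstates G (Suc n) j. incl_cochain j n x S * dcoef G S T)"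
      unfolding V(2) LHS by (intro sum.cong refl) (simp add: mult.assoc mult.left_commute)
    also have "\<dots> = dmap G (Suc n) j (incl_cochain j n x) T" using TB by (simp add: dmap_def)
    finally show ?thesis by simp
  next
    case False
    then have R: "incl_cochain j (Suc n) (dmap G' n j x) T = 0" using incl_cochain_not_lifted by blast
    show ?thesis
    proof (cases "T \<in> bstates G (Suc (Suc n)) j")
      case TB: True
      then have eT: "e \<notin> fst T" using lift_state_surj False by blast
      have "dcoef G (lift_state U) T = 0" if "U \<in> bstates G' n j" for U
        using lift_state_bstates[OF that] dcoef_subset eT by blast
      then have "(\<Sum>U\<in>bstates G' n j. sign_above (fst U) * x U * dcoef G (lift_state U) T) = 0" by simp
      then show ?thesis using R LHS TB by (simp add: dmap_def)
    next
      case False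
      then show ?thesis using R by (simp add: dmap_def)
    qed
  qed
qed

lemma short_exact_cochains_contraction:
  "short_exact_cochains (\<lambda>n. bstates G' n j) (\<lambda>n. bstates G n j) (\<lambda>n. bstates (delete_edge G e) n j)
     (\<lambda>n. dmap G' n j) (\<lambda>n. dmap G n j) (\<lambda>n. dmap (delete_edge G e) n j) (incl_cochain j) restrict_cochain"
  apply unfold_locales
  apply (rule dmap_additive)
  apply (rule dmap_additive)
  apply (rule dmap_additive)
  apply (erule dmap_dmap[OF wf])
  apply (rule incl_cochain_additive)
  apply (erule (1) incl_cochain_kernel)
  apply (rule restrict_cochain_additive)
  apply (erule restrict_cochain_surj)
  apply (erule (1) restrict_cochain_exact)
  apply (rule restrict_incl_cochain)
  apply (erule (1) restrict_cochain_0_kernel)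
  apply (erule restrict_cochain_chain)
  apply (erule incl_cochain_chain)
  done

end

lemma contraction_contract_edge:
  assumes wf: "wf_sgraph G" and e: "e \<in> edges G" "sgn G e = 1" and ab: "ends G e = (a, b)"
  shows "contraction G (contract_edge G e) e a b (\<lambda>x. if x = b then a else x)"
proof -
  define r where "r = (\<lambda>x. if x = b then a else x)"
  have aV: "a \<in> verts G" using wf e ab unfolding wf_sgraph_def by force
  have "ends (contract_edge G e) = (\<lambda>f. map_prod r r (ends G f)) \<and> sgn (contract_edge G e) = sgn G \<and>
    edges (contract_edge G e) = edges G - {e} \<and> verts (contract_edge G e) = r ` verts G"
  proof (cases "a = b")
    case True
    then have r: "r = id" by (auto simp: r_def fun_eq_iff)
    show ?thesis unfolding r using True ab by (simp add: contract_edge_def delete_edge_def map_prod.id)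
  next
    case False
    have "r ` verts G = verts G - {b}"
      using aV False by (auto simp: r_def image_iff intro: bexI[of _ x for x])
    then show ?thesis using False ab unfolding contract_edge_def r_def by (simp add: Let_def fun_eq_iff)
  qed
  then show ?thesis using wf e ab unfolding r_def by unfold_locales auto
qed

theorem corollary4p17:
  fixes SG :: "('v, 'e::linorder) sgraph" and e :: 'e
  assumes "wf_sgraph SG" and "e \<in> edges SG" and "sgn SG e = 1"
  shows "\<forall>j. \<exists>\<beta> \<gamma> \<delta>.
     (\<forall>i. \<beta> i \<in> hom (bcohom SG i j) (bcohom (delete_edge SG e) i j)) \<and>
     (\<forall>i. \<gamma> i \<in> hom (bcohom (delete_edge SG e) i j) (bcohom (contract_edge SG e) i j)) \<and>
     (\<forall>i. \<delta> i \<in> hom (bcohom (contract_edge SG e) i j) (bcohom SG (Suc i) j)) \<and>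
     kernel (bcohom SG 0 j) (bcohom (delete_edge SG e) 0 j) (\<beta> 0)
        = {\<one>\<^bsub>bcohom SG 0 j\<^esub>} \<and>
     (\<forall>i. kernel (bcohom SG (Suc i) j) (bcohom (delete_edge SG e) (Suc i) j) (\<beta> (Suc i))
        = \<delta> i ` carrier (bcohom (contract_edge SG e) i j)) \<and>
     (\<forall>i. kernel (bcohom (delete_edge SG e) i j) (bcohom (contract_edge SG e) i j) (\<gamma> i)
        = \<beta> i ` carrier (bcohom SG i j)) \<and>
     (\<forall>i. kernel (bcohom (contract_edge SG e) i j) (bcohom SG (Suc i) j) (\<delta> i)
        = \<gamma> i ` carrier (bcohom (delete_edge SG e) i j))"
proof -
  obtain a b where ab: "ends SG e = (a, b)" by (cases "ends SG e")
  interpret contraction SG "contract_edge SG e" e a b "\<lambda>x. if x = b then a else x"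
    by (rule contraction_contract_edge[OF assms ab])
  show ?thesis unfolding bcohom_eq_cohomology
    by (intro allI short_exact_cochains.long_exact_sequence[OF short_exact_cochains_contraction])
qed

end
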